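(* Let $P:\mathcal{C}^{\mathrm{op}}\to\mathbf{Pos}$ be a universal slat-doctrine and suppose $\mathcal{C}$ has exponents. Then the existential completion $P^{ex}$ is both existential and universal.
   Context: A slat-doctrine is a functor $P:\mathcal{C}^{\mathrm{op}}\to\mathbf{Pos}$ where $\mathcal{C}$ has finite products; for $f:X\to Y$, $P_f:P(Y)\to P(X)$ is reindexing. $P$ is existential (resp. universal) if for all objects $A_1,A_2$ and $i=1,2$ the map $P_{\mathrm{pr}_i}:P(A_i)\to P(A_1\times A_2)$ has a left adjoint $\exists_{\mathrm{pr}_i}$ (resp. a right adjoint $\forall_{\mathrm{pr}_i}$) and these satisfy the Beck–Chevalley condition: for every pullback square with projections $\mathrm{pr}':X'\to A'$, $\mathrm{pr}:X\to A$ and arrows $f:A'\to A$, $f':X'\to X$ with $\mathrm{pr}\, f'=f\,\mathrm{pr}'$, one has $\exists_{\mathrm{pr}'}P_{f'}=P_f\exists_{\mathrm{pr}}$ (resp. $\forall_{\mathrm{pr}'}P_{f'}=P_f\forall_{\mathrm{pr}}$). Existential completion: $P^{ex}(A)$ is the poset (reflection of the preorder) of triples $(A,B,\alpha)$ with $\alpha\in P(A\times B)$, where $(A,B,\alpha)\le(A,C,\beta)$ iff there is $f:A\times B\to C$ with $\alpha\le P_{\langle\mathrm{pr}_A,f\rangle}(\beta)$; for $f:A\to C$, $P^{ex}_f(C,D,\gamma)=(A,D,P_{f\times 1_D}(\gamma))$. *)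

theory Defs
  imports Main
begin

record ('o,'a) cat =
  Obj  :: "'o set"
  Arr  :: "'a set"
  Dom  :: "'a \<Rightarrow> 'o"
  Cod  :: "'a \<Rightarrow> 'o"
  Comp :: "'a \<Rightarrow> 'a \<Rightarrow> 'a"   (* Comp g f = g o f *)
  Id   :: "'o \<Rightarrow> 'a"

definition Hom :: "('o,'a) cat \<Rightarrow> 'o \<Rightarrow> 'o \<Rightarrow> 'a set" where
  "Hom C X Y = {f \<in> Arr C. Dom C f = X \<and> Cod C f = Y}"

definition category :: "('o,'a) cat \<Rightarrow> bool" where
  "category C \<longleftrightarrow>
     (\<forall>f\<in>Arr C. Dom C f \<in> Obj C \<and> Cod C f \<in> Obj C) \<and>
     (\<forall>X\<in>Obj C. Id C X \<in> Hom C X X) \<and>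
     (\<forall>f\<in>Arr C. \<forall>g\<in>Arr C. Cod C f = Dom C g \<longrightarrow> Comp C g f \<in> Hom C (Dom C f) (Cod C g)) \<and>
     (\<forall>f\<in>Arr C. Comp C f (Id C (Dom C f)) = f \<and> Comp C (Id C (Cod C f)) f = f) \<and>
     (\<forall>f\<in>Arr C. \<forall>g\<in>Arr C. \<forall>h\<in>Arr C. Cod C f = Dom C g \<longrightarrow> Cod C g = Dom C h \<longrightarrow>
        Comp C h (Comp C g f) = Comp C (Comp C h g) f)"

record ('o,'a) prods =
  Prod :: "'o \<Rightarrow> 'o \<Rightarrow> 'o"
  Pr1  :: "'o \<Rightarrow> 'o \<Rightarrow> 'a"
  Pr2  :: "'o \<Rightarrow> 'o \<Rightarrow> 'a"
  Pair :: "'a \<Rightarrow> 'a \<Rightarrow> 'a"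
  Term :: "'o"
  Bang :: "'o \<Rightarrow> 'a"

definition finite_products :: "('o,'a) cat \<Rightarrow> ('o,'a) prods \<Rightarrow> bool" where
  "finite_products C Pr \<longleftrightarrow>
     (\<forall>A\<in>Obj C. \<forall>B\<in>Obj C.
        Prod Pr A B \<in> Obj C \<and>
        Pr1 Pr A B \<in> Hom C (Prod Pr A B) A \<and>
        Pr2 Pr A B \<in> Hom C (Prod Pr A B) B \<and>
        (\<forall>Z\<in>Obj C. \<forall>f\<in>Hom C Z A. \<forall>g\<in>Hom C Z B.
           Pair Pr f g \<in> Hom C Z (Prod Pr A B) \<and>
           Comp C (Pr1 Pr A B) (Pair Pr f g) = f \<and>
           Comp C (Pr2 Pr A B) (Pair Pr f g) = g \<and>
           (\<forall>h\<in>Hom C Z (Prod Pr A B).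
              Comp C (Pr1 Pr A B) h = f \<and> Comp C (Pr2 Pr A B) h = g \<longrightarrow> h = Pair Pr f g))) \<and>
     Term Pr \<in> Obj C \<and>
     (\<forall>X\<in>Obj C. Bang Pr X \<in> Hom C X (Term Pr) \<and> (\<forall>h\<in>Hom C X (Term Pr). h = Bang Pr X))"

definition times :: "('o,'a) cat \<Rightarrow> ('o,'a) prods \<Rightarrow> 'a \<Rightarrow> 'a \<Rightarrow> 'a" where
  "times C Pr f g =
     Pair Pr (Comp C f (Pr1 Pr (Dom C f) (Dom C g))) (Comp C g (Pr2 Pr (Dom C f) (Dom C g)))"

definition has_exponents :: "('o,'a) cat \<Rightarrow> ('o,'a) prods \<Rightarrow> bool" where
  "has_exponents C Pr \<longleftrightarrow>
     (\<forall>A\<in>Obj C. \<forall>B\<in>Obj C. \<exists>E\<in>Obj C. \<exists>ev\<in>Hom C (Prod Pr E A) B.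
        \<forall>Z\<in>Obj C. \<forall>g\<in>Hom C (Prod Pr Z A) B.
          \<exists>!h. h \<in> Hom C Z E \<and> Comp C ev (times C Pr h (Id C A)) = g)"

definition pullback :: "('o,'a) cat \<Rightarrow> 'a \<Rightarrow> 'a \<Rightarrow> 'a \<Rightarrow> 'a \<Rightarrow> bool" where
  \<comment> \<open>square  p' : X' \<rightarrow> A',  f' : X' \<rightarrow> X,  p : X \<rightarrow> A,  f : A' \<rightarrow> A\<close>
  "pullback C p' f' p f \<longleftrightarrow>
     Comp C p f' = Comp C f p' \<and>
     (\<forall>Z\<in>Obj C. \<forall>g\<in>Hom C Z (Cod C p'). \<forall>h\<in>Hom C Z (Dom C p).
        Comp C f g = Comp C p h \<longrightarrow>
        (\<exists>!k. k \<in> Hom C Z (Dom C p') \<and> Comp C p' k = g \<and> Comp C f' k = h))"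

definition is_proj :: "('o,'a) cat \<Rightarrow> ('o,'a) prods \<Rightarrow> 'a \<Rightarrow> 'o \<Rightarrow> 'o \<Rightarrow> bool" where
  "is_proj C Pr p X A \<longleftrightarrow>
     (\<exists>A1\<in>Obj C. \<exists>A2\<in>Obj C. X = Prod Pr A1 A2 \<and>
        ((A = A1 \<and> p = Pr1 Pr A1 A2) \<or> (A = A2 \<and> p = Pr2 Pr A1 A2)))"

record ('o,'a,'x) doctrine =
  PO :: "'o \<Rightarrow> 'x set"
  PL :: "'o \<Rightarrow> 'x \<Rightarrow> 'x \<Rightarrow> bool"
  PM :: "'a \<Rightarrow> 'x \<Rightarrow> 'x"              (* reindexing P_f : P(Cod f) \<rightarrow> P(Dom f) *)

definition doctrine :: "('o,'a) cat \<Rightarrow> ('o,'a,'x) doctrine \<Rightarrow> bool" where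
  "doctrine C D \<longleftrightarrow>
     (\<forall>A\<in>Obj C.
        (\<forall>x\<in>PO D A. PL D A x x) \<and>
        (\<forall>x\<in>PO D A. \<forall>y\<in>PO D A. PL D A x y \<and> PL D A y x \<longrightarrow> x = y) \<and>
        (\<forall>x\<in>PO D A. \<forall>y\<in>PO D A. \<forall>z\<in>PO D A. PL D A x y \<and> PL D A y z \<longrightarrow> PL D A x z)) \<and>
     (\<forall>f\<in>Arr C. \<forall>x\<in>PO D (Cod C f). PM D f x \<in> PO D (Dom C f)) \<and>
     (\<forall>f\<in>Arr C. \<forall>x\<in>PO D (Cod C f). \<forall>y\<in>PO D (Cod C f).
        PL D (Cod C f) x y \<longrightarrow> PL D (Dom C f) (PM D f x) (PM D f y)) \<and>
     (\<forall>A\<in>Obj C. \<forall>x\<in>PO D A. PM D (Id C A) x = x) \<and>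
     (\<forall>f\<in>Arr C. \<forall>g\<in>Arr C. Cod C f = Dom C g \<longrightarrow>
        (\<forall>x\<in>PO D (Cod C g). PM D (Comp C g f) x = PM D f (PM D g x)))"

definition is_left_adj :: "('o,'a,'x) doctrine \<Rightarrow> 'a \<Rightarrow> 'o \<Rightarrow> 'o \<Rightarrow> ('x \<Rightarrow> 'x) \<Rightarrow> bool" where
  "is_left_adj D p X A L \<longleftrightarrow>
     (\<forall>x\<in>PO D X. L x \<in> PO D A) \<and>
     (\<forall>x\<in>PO D X. \<forall>a\<in>PO D A. PL D A (L x) a \<longleftrightarrow> PL D X x (PM D p a))"

definition is_right_adj :: "('o,'a,'x) doctrine \<Rightarrow> 'a \<Rightarrow> 'o \<Rightarrow> 'o \<Rightarrow> ('x \<Rightarrow> 'x) \<Rightarrow> bool" where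
  "is_right_adj D p X A R \<longleftrightarrow>
     (\<forall>x\<in>PO D X. R x \<in> PO D A) \<and>
     (\<forall>x\<in>PO D X. \<forall>a\<in>PO D A. PL D X (PM D p a) x \<longleftrightarrow> PL D A a (R x))"

definition existential :: "('o,'a) cat \<Rightarrow> ('o,'a) prods \<Rightarrow> ('o,'a,'x) doctrine \<Rightarrow> bool" where
  "existential C Pr D \<longleftrightarrow>
     (\<exists>L :: 'a \<Rightarrow> 'x \<Rightarrow> 'x.
        (\<forall>p X A. is_proj C Pr p X A \<longrightarrow> is_left_adj D p X A (L p)) \<and>
        (\<forall>p X A p' X' A' f f'.
           is_proj C Pr p X A \<and> is_proj C Pr p' X' A' \<and>
           f \<in> Hom C A' A \<and> f' \<in> Hom C X' X \<and> pullback C p' f' p f \<longrightarrow>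
           (\<forall>x\<in>PO D X. L p' (PM D f' x) = PM D f (L p x))))"

definition universal :: "('o,'a) cat \<Rightarrow> ('o,'a) prods \<Rightarrow> ('o,'a,'x) doctrine \<Rightarrow> bool" where
  "universal C Pr D \<longleftrightarrow>
     (\<exists>R :: 'a \<Rightarrow> 'x \<Rightarrow> 'x.
        (\<forall>p X A. is_proj C Pr p X A \<longrightarrow> is_right_adj D p X A (R p)) \<and>
        (\<forall>p X A p' X' A' f f'.
           is_proj C Pr p X A \<and> is_proj C Pr p' X' A' \<and>
           f \<in> Hom C A' A \<and> f' \<in> Hom C X' X \<and> pullback C p' f' p f \<longrightarrow>
           (\<forall>x\<in>PO D X. R p' (PM D f' x) = PM D f (R p x))))"

text \<open>Triples (A,B,\<alpha>) with A fixed are represented as pairs (B,\<alpha>), \<alpha> \<in> P(A\<times>B).\<close>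
definition exT :: "('o,'a) cat \<Rightarrow> ('o,'a) prods \<Rightarrow> ('o,'a,'x) doctrine \<Rightarrow> 'o \<Rightarrow> ('o \<times> 'x) set" where
  "exT C Pr D A = {(B,\<alpha>). B \<in> Obj C \<and> \<alpha> \<in> PO D (Prod Pr A B)}"

definition exle :: "('o,'a) cat \<Rightarrow> ('o,'a) prods \<Rightarrow> ('o,'a,'x) doctrine \<Rightarrow> 'o \<Rightarrow> ('o \<times> 'x) \<Rightarrow> ('o \<times> 'x) \<Rightarrow> bool" where
  "exle C Pr D A u v \<longleftrightarrow>
     (\<exists>f\<in>Hom C (Prod Pr A (fst u)) (fst v).
        PL D (Prod Pr A (fst u)) (snd u) (PM D (Pair Pr (Pr1 Pr A (fst u)) f) (snd v)))"

definition exclass :: "('o,'a) cat \<Rightarrow> ('o,'a) prods \<Rightarrow> ('o,'a,'x) doctrine \<Rightarrow> 'o \<Rightarrow> ('o \<times> 'x) \<Rightarrow> ('o \<times> 'x) set" where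
  "exclass C Pr D A u = {v \<in> exT C Pr D A. exle C Pr D A u v \<and> exle C Pr D A v u}"

definition Pex :: "('o,'a) cat \<Rightarrow> ('o,'a) prods \<Rightarrow> ('o,'a,'x) doctrine \<Rightarrow> ('o,'a,('o \<times> 'x) set) doctrine" where
  "Pex C Pr D =
     \<lparr> PO = (\<lambda>A. exclass C Pr D A ` exT C Pr D A),
       PL = (\<lambda>A S T. \<exists>u\<in>S. \<exists>v\<in>T. exle C Pr D A u v),
       PM = (\<lambda>f S. \<Union>u\<in>S. exclass C Pr D (Dom C f)
                          (fst u, PM D (times C Pr f (Id C (fst u))) (snd u))) \<rparr>"

end

theory Submission
  imports Defs
begin

text \<open>An element of \<open>P\<^sup>e\<^sup>x(A)\<close> is represented by a pair \<open>(B, \<alpha>)\<close> with \<open>\<alpha> \<in> P(A \<times> B)\<close>, read as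
  \<open>\<exists>b:B. \<alpha>(a, b)\<close>, and every product projection \<open>p : X \<rightarrow> A\<close> is, up to isomorphism, the first
  projection \<open>A \<times> K \<rightarrow> A\<close>. Existential quantification along it only moves the quantified variable
  into the witness: \<open>\<exists>\<^sub>p (B, \<alpha>) = (K \<times> B, \<alpha>)\<close>; this needs no hypothesis on \<open>P\<close>. Universal
  quantification is Skolemisation: \<open>\<forall>k. \<exists>b. \<alpha>(a, k, b)\<close> is equivalent to
  \<open>\<exists>e:B\<^sup>K. \<forall>k. \<alpha>(a, k, e k)\<close>, so \<open>\<forall>\<^sub>p (B, \<alpha>) = (B\<^sup>K, \<forall>\<^sub>k \<alpha>(a, k, ev(e, k)))\<close> with the universal
  quantifier of \<open>P\<close>. Both maps are shown to be adjoint to reindexing and to satisfy Beck-Chevalley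
  on representatives; being monotone, they descend to the quotient \<open>P\<^sup>e\<^sup>x\<close>.\<close>

locale cartesian_category =
  fixes C :: "('o,'a) cat" and Pr :: "('o,'a) prods"
  assumes category: "category C" and finite_products: "finite_products C Pr"
begin

abbreviation ob where "ob X \<equiv> X \<in> Obj C"
abbreviation ar where "ar f \<equiv> f \<in> Arr C"
abbreviation dm where "dm \<equiv> Dom C"
abbreviation cd where "cd \<equiv> Cod C"
abbreviation cmp (infixr "\<cdot>" 80) where "g \<cdot> f \<equiv> Comp C g f"
abbreviation idn where "idn \<equiv> Id C"
abbreviation prd where "prd \<equiv> Prod Pr"
abbreviation p1 where "p1 \<equiv> Pr1 Pr"
abbreviation p2 where "p2 \<equiv> Pr2 Pr"
abbreviation pair ("\<langle>_, _\<rangle>") where "\<langle>f, g\<rangle> \<equiv> Pair Pr f g"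

lemma arr_obj [simp]: "ar f \<Longrightarrow> ob (dm f)" "ar f \<Longrightarrow> ob (cd f)"
  using category unfolding category_def by auto

lemma id_arr [simp]: "ob X \<Longrightarrow> ar (idn X)" "ob X \<Longrightarrow> dm (idn X) = X" "ob X \<Longrightarrow> cd (idn X) = X"
  using category unfolding category_def Hom_def by auto

lemma comp_arr [simp]:
  "ar f \<Longrightarrow> ar g \<Longrightarrow> cd f = dm g \<Longrightarrow> ar (g \<cdot> f)"
  "ar f \<Longrightarrow> ar g \<Longrightarrow> cd f = dm g \<Longrightarrow> dm (g \<cdot> f) = dm f"
  "ar f \<Longrightarrow> ar g \<Longrightarrow> cd f = dm g \<Longrightarrow> cd (g \<cdot> f) = cd g"
  using category unfolding category_def Hom_def by auto

lemma comp_id [simp]: "ar f \<Longrightarrow> dm f = X \<Longrightarrow> f \<cdot> idn X = f" "ar f \<Longrightarrow> cd f = Y \<Longrightarrow> idn Y \<cdot> f = f"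
  using category unfolding category_def Hom_def by auto

lemma comp_assoc [simp]:
  assumes "ar f" "ar g" "ar h" "cd f = dm g" "cd g = dm h"
  shows "(h \<cdot> g) \<cdot> f = h \<cdot> (g \<cdot> f)"
proof -
  have "\<forall>f\<in>Arr C. \<forall>g\<in>Arr C. \<forall>h\<in>Arr C. cd f = dm g \<longrightarrow> cd g = dm h \<longrightarrow>
      h \<cdot> (g \<cdot> f) = (h \<cdot> g) \<cdot> f"
    using category unfolding category_def by blast
  then show ?thesis
    using assms by simp
qed

lemma prod_obj [simp]: "ob A \<Longrightarrow> ob B \<Longrightarrow> ob (prd A B)"
  using finite_products unfolding finite_products_def by auto

lemma p1_arr [simp]:
  "ob A \<Longrightarrow> ob B \<Longrightarrow> ar (p1 A B)" "ob A \<Longrightarrow> ob B \<Longrightarrow> dm (p1 A B) = prd A B"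
  "ob A \<Longrightarrow> ob B \<Longrightarrow> cd (p1 A B) = A"
  using finite_products unfolding finite_products_def Hom_def by auto

lemma p2_arr [simp]:
  "ob A \<Longrightarrow> ob B \<Longrightarrow> ar (p2 A B)" "ob A \<Longrightarrow> ob B \<Longrightarrow> dm (p2 A B) = prd A B"
  "ob A \<Longrightarrow> ob B \<Longrightarrow> cd (p2 A B) = B"
  using finite_products unfolding finite_products_def Hom_def by auto

lemma pair_universal:
  assumes "ob A" "ob B" "ob Z" "f \<in> Hom C Z A" "g \<in> Hom C Z B"
  shows "\<langle>f, g\<rangle> \<in> Hom C Z (prd A B) \<and> p1 A B \<cdot> \<langle>f, g\<rangle> = f \<and> p2 A B \<cdot> \<langle>f, g\<rangle> = g \<and>
    (\<forall>h\<in>Hom C Z (prd A B). p1 A B \<cdot> h = f \<and> p2 A B \<cdot> h = g \<longrightarrow> h = \<langle>f, g\<rangle>)"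
  using finite_products assms unfolding finite_products_def by blast

lemma pair_arr [simp]:
  assumes "ar f" "ar g" "dm f = dm g"
  shows "ar \<langle>f, g\<rangle>" "dm \<langle>f, g\<rangle> = dm f" "cd \<langle>f, g\<rangle> = prd (cd f) (cd g)"
  using pair_universal[of "cd f" "cd g" "dm f" f g] assms unfolding Hom_def by auto

lemma proj_pair [simp]:
  assumes "ar f" "ar g" "dm f = dm g" "cd f = A" "cd g = B"
  shows "p1 A B \<cdot> \<langle>f, g\<rangle> = f" "p2 A B \<cdot> \<langle>f, g\<rangle> = g"
  using pair_universal[of A B "dm f" f g] assms unfolding Hom_def by auto

lemma prod_arr_ext:
  assumes "ar h" "ar k" "dm h = dm k" "cd h = prd A B" "cd k = prd A B" "ob A" "ob B"
    and "p1 A B \<cdot> h = p1 A B \<cdot> k" "p2 A B \<cdot> h = p2 A B \<cdot> k"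
  shows "h = k"
proof -
  have "h' = \<langle>p1 A B \<cdot> k, p2 A B \<cdot> k\<rangle>" if "ar h'" "dm h' = dm k" "cd h' = prd A B"
      "p1 A B \<cdot> h' = p1 A B \<cdot> k" "p2 A B \<cdot> h' = p2 A B \<cdot> k" for h'
    using pair_universal[of A B "dm k" "p1 A B \<cdot> k" "p2 A B \<cdot> k"] that assms unfolding Hom_def
      by auto
  from this[of h] this[of k] show ?thesis
    using assms by simp
qed

lemma pair_eta [simp]: "ar h \<Longrightarrow> cd h = prd A B \<Longrightarrow> ob A \<Longrightarrow> ob B \<Longrightarrow> \<langle>p1 A B \<cdot> h, p2 A B \<cdot> h\<rangle> = h"
  by (rule prod_arr_ext[of _ _ A B]) auto

lemma pair_proj [simp]: "ob A \<Longrightarrow> ob B \<Longrightarrow> \<langle>p1 A B, p2 A B\<rangle> = idn (prd A B)"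
  by (rule prod_arr_ext[of _ _ A B]) auto

lemma pair_comp [simp]:
  assumes "ar f" "ar g" "ar h" "dm f = dm g" "cd h = dm f"
  shows "\<langle>f, g\<rangle> \<cdot> h = \<langle>f \<cdot> h, g \<cdot> h\<rangle>"
proof (rule prod_arr_ext[of _ _ "cd f" "cd g"])
  show "p1 (cd f) (cd g) \<cdot> \<langle>f, g\<rangle> \<cdot> h = p1 (cd f) (cd g) \<cdot> \<langle>f \<cdot> h, g \<cdot> h\<rangle>"
    using assms comp_assoc[of h "\<langle>f, g\<rangle>" "p1 (cd f) (cd g)"] by simp
  show "p2 (cd f) (cd g) \<cdot> \<langle>f, g\<rangle> \<cdot> h = p2 (cd f) (cd g) \<cdot> \<langle>f \<cdot> h, g \<cdot> h\<rangle>"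
    using assms comp_assoc[of h "\<langle>f, g\<rangle>" "p2 (cd f) (cd g)"] by simp
qed (use assms in auto)

lemma times_id [simp]: "ar f \<Longrightarrow> ob Y \<Longrightarrow> times C Pr f (idn Y) = \<langle>f \<cdot> p1 (dm f) Y, p2 (dm f) Y\<rangle>"
  unfolding times_def by simp

lemma pullback_commutes: "pullback C p' f' p f \<Longrightarrow> p \<cdot> f' = f \<cdot> p'"
  unfolding pullback_def by simp

lemma pullback_factor:
  assumes "pullback C p' f' p f" "ob Z" "ar g" "dm g = Z" "cd g = cd p'" "ar h" "dm h = Z"
    "cd h = dm p"
    and "f \<cdot> g = p \<cdot> h"
  obtains k where "ar k" "dm k = Z" "cd k = dm p'" "p' \<cdot> k = g" "f' \<cdot> k = h"
proof -
  have "\<exists>!k. k \<in> Hom C Z (dm p') \<and> p' \<cdot> k = g \<and> f' \<cdot> k = h"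
    using assms unfolding pullback_def Hom_def by auto
  then show ?thesis
    using that unfolding Hom_def by auto
qed

lemma pullback_times_id:
  assumes "ar h" "dm h = Z'" "cd h = Z" "ob Y"
  shows "pullback C (p1 Z' Y) \<langle>h \<cdot> p1 Z' Y, p2 Z' Y\<rangle> (p1 Z Y) h"
  unfolding pullback_def
proof (intro conjI ballI impI)
  have obj: "ob Z" "ob Z'"
    using assms by auto
  show "p1 Z Y \<cdot> \<langle>h \<cdot> p1 Z' Y, p2 Z' Y\<rangle> = h \<cdot> p1 Z' Y"
    using assms obj by simp
  fix Z0 g k
  assume "ob Z0" "g \<in> Hom C Z0 (cd (p1 Z' Y))" "k \<in> Hom C Z0 (dm (p1 Z Y))" and comm:
    "h \<cdot> g = p1 Z Y \<cdot> k"
  then have g: "ar g" "dm g = Z0" "cd g = Z'" and k: "ar k" "dm k = Z0" "cd k = prd Z Y"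
    using obj assms unfolding Hom_def by auto
  show "\<exists>!m. m \<in> Hom C Z0 (dm (p1 Z' Y)) \<and> p1 Z' Y \<cdot> m = g \<and> \<langle>h \<cdot> p1 Z' Y, p2 Z' Y\<rangle> \<cdot> m = k"
  proof
    show "\<langle>g, p2 Z Y \<cdot> k\<rangle> \<in> Hom C Z0 (dm (p1 Z' Y)) \<and> p1 Z' Y \<cdot> \<langle>g, p2 Z Y \<cdot> k\<rangle> = g \<and>
        \<langle>h \<cdot> p1 Z' Y, p2 Z' Y\<rangle> \<cdot> \<langle>g, p2 Z Y \<cdot> k\<rangle> = k"
      using g k obj assms comm unfolding Hom_def by simp
    fix m
    assume m: "m \<in> Hom C Z0 (dm (p1 Z' Y)) \<and> p1 Z' Y \<cdot> m = g \<and> \<langle>h \<cdot> p1 Z' Y, p2 Z' Y\<rangle> \<cdot> m = k"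
    then have "ar m" "cd m = prd Z' Y"
      using obj assms unfolding Hom_def by auto
    moreover have "p2 Z' Y \<cdot> m = p2 Z Y \<cdot> k"
      using m \<open>ar m\<close> \<open>cd m = prd Z' Y\<close> obj assms g by auto
    ultimately show "m = \<langle>g, p2 Z Y \<cdot> k\<rangle>"
      using pair_eta[of m Z' Y] m obj assms by simp
  qed
qed

lemma is_proj_arr:
  assumes "is_proj C Pr p X A"
  shows "ar p" "dm p = X" "cd p = A" "ob X" "ob A"
  using assms unfolding is_proj_def by auto

text \<open>A projection onto either factor of a product is, up to the isomorphism \<open>\<langle>p, q\<rangle> : X \<rightarrow> A \<times> K\<close>
  with inverse \<open>s\<close>, the first projection of \<open>A \<times> K\<close>; this lets both cases of \<open>is_proj\<close> be
  treated alike.\<close>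

definition product_split :: "'o \<Rightarrow> 'o \<Rightarrow> 'o \<Rightarrow> 'a \<Rightarrow> 'a \<Rightarrow> 'a \<Rightarrow> bool" where
  "product_split X A K p q s \<longleftrightarrow>
     ar p \<and> dm p = X \<and> cd p = A \<and> ar q \<and> dm q = X \<and> cd q = K \<and> ob K \<and>
     ar s \<and> dm s = prd A K \<and> cd s = X \<and>
     p \<cdot> s = p1 A K \<and> q \<cdot> s = p2 A K \<and> s \<cdot> \<langle>p, q\<rangle> = idn X"

lemma product_split_arr:
  assumes "product_split X A K p q s"
  shows "ar p" "dm p = X" "cd p = A" "ar q" "dm q = X" "cd q = K" "ar s" "dm s = prd A K" "cd s = X"
    "ob X" "ob A" "ob K"
  using assms arr_obj unfolding product_split_def by auto

lemma product_split_comp: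
  assumes "product_split X A K p q s" "ar h" "cd h = prd A K"
  shows "p \<cdot> (s \<cdot> h) = p1 A K \<cdot> h" "q \<cdot> (s \<cdot> h) = p2 A K \<cdot> h"
  using assms comp_assoc[of h s p] comp_assoc[of h s q] unfolding product_split_def by auto

lemma product_split_pair:
  assumes "product_split X A K p q s" "ar h" "cd h = X"
  shows "s \<cdot> \<langle>p \<cdot> h, q \<cdot> h\<rangle> = h"
proof -
  note arr = product_split_arr[OF assms(1)]
  have "s \<cdot> \<langle>p \<cdot> h, q \<cdot> h\<rangle> = (s \<cdot> \<langle>p, q\<rangle>) \<cdot> h"
    using assms arr by simp
  also have "\<dots> = h"
    using assms unfolding product_split_def by simp
  finally show ?thesis .
qed

lemma is_proj_product_split:
  assumes "is_proj C Pr p X A"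
  obtains K q s where "product_split X A K p q s"
proof -
  obtain A1 A2 where obj: "ob A1" "ob A2" "X = prd A1 A2"
    and "(A = A1 \<and> p = p1 A1 A2) \<or> (A = A2 \<and> p = p2 A1 A2)"
    using assms unfolding is_proj_def by auto
  then consider "A = A1" "p = p1 A1 A2" | "A = A2" "p = p2 A1 A2"
    by blast
  then show ?thesis
  proof cases
    case 1
    then have "product_split X A A2 p (p2 A1 A2) (idn (prd A1 A2))"
      unfolding product_split_def using obj by simp
    then show ?thesis
      using that by blast
  next
    case 2
    then have "product_split X A A1 p (p1 A1 A2) \<langle>p2 A2 A1, p1 A2 A1\<rangle>"
      unfolding product_split_def using obj by simp
    then show ?thesis
      using that by blast
  qed
qed

definition proj_split :: "'a \<Rightarrow> 'o \<times> 'a \<times> 'a" where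
  "proj_split p = (SOME (K, q, s). product_split (dm p) (cd p) K p q s)"

lemma proj_split:
  assumes "is_proj C Pr p X A"
  shows "product_split X A (fst (proj_split p)) p (fst (snd (proj_split p)))
    (snd (snd (proj_split p)))"
proof -
  obtain K q s where "product_split X A K p q s"
    using is_proj_product_split[OF assms] .
  then have "product_split (dm p) (cd p) K p q s"
    using is_proj_arr[OF assms] by simp
  then have "product_split (dm p) (cd p) (fst (proj_split p)) p (fst (snd (proj_split p)))
    (snd (snd (proj_split p)))"
    unfolding proj_split_def
      using someI[of "\<lambda>(K, q, s). product_split (dm p) (cd p) K p q s" "(K, q, s)"]
    by (simp add: case_prod_beta)
  then show ?thesis
    using is_proj_arr[OF assms] by simp
qed

definition is_exponential :: "'o \<Rightarrow> 'o \<Rightarrow> 'o \<Rightarrow> 'a \<Rightarrow> bool" where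
  "is_exponential K B E ev \<longleftrightarrow> ob E \<and> ar ev \<and> dm ev = prd E K \<and> cd ev = B \<and>
     (\<forall>Z g. ob Z \<and> ar g \<and> dm g = prd Z K \<and> cd g = B \<longrightarrow>
        (\<exists>h. ar h \<and> dm h = Z \<and> cd h = E \<and> ev \<cdot> \<langle>h \<cdot> p1 Z K, p2 Z K\<rangle> = g))"

definition exp_obj :: "'o \<Rightarrow> 'o \<Rightarrow> 'o" where
  "exp_obj K B = fst (SOME x. is_exponential K B (fst x) (snd x))"

definition eval :: "'o \<Rightarrow> 'o \<Rightarrow> 'a" where
  "eval K B = snd (SOME x. is_exponential K B (fst x) (snd x))"

lemma exponential:
  assumes "has_exponents C Pr" "ob K" "ob B"
  shows "is_exponential K B (exp_obj K B) (eval K B)"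
proof -
  obtain E ev where "ob E" "ev \<in> Hom C (prd E K) B"
    and transpose:
      "\<forall>Z\<in>Obj C. \<forall>g\<in>Hom C (prd Z K) B. \<exists>!h. h \<in> Hom C Z E \<and> ev \<cdot> times C Pr h (idn K) = g"
    using assms unfolding has_exponents_def by blast
  have "\<exists>h. ar h \<and> dm h = Z \<and> cd h = E \<and> ev \<cdot> \<langle>h \<cdot> p1 Z K, p2 Z K\<rangle> = g"
    if "ob Z" "ar g" "dm g = prd Z K" "cd g = B" for Z g
  proof -
    have "g \<in> Hom C (prd Z K) B"
      using that unfolding Hom_def by simp
    then have "\<exists>!h. h \<in> Hom C Z E \<and> ev \<cdot> times C Pr h (idn K) = g"
      using transpose \<open>ob Z\<close> by blast
    then obtain h where "h \<in> Hom C Z E" "ev \<cdot> times C Pr h (idn K) = g"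
      by auto
    then show ?thesis
      using assms(2) unfolding Hom_def by auto
  qed
  with \<open>ob E\<close> \<open>ev \<in> Hom C (prd E K) B\<close> have "is_exponential K B E ev"
    unfolding is_exponential_def Hom_def by blast
  then show ?thesis
    unfolding exp_obj_def eval_def
      using someI[of "\<lambda>x. is_exponential K B (fst x) (snd x)" "(E, ev)"]
    by simp
qed

lemma exp_obj [simp]: "has_exponents C Pr \<Longrightarrow> ob K \<Longrightarrow> ob B \<Longrightarrow> ob (exp_obj K B)"
  and eval_arr [simp]: "has_exponents C Pr \<Longrightarrow> ob K \<Longrightarrow> ob B \<Longrightarrow> ar (eval K B)"
    "has_exponents C Pr \<Longrightarrow> ob K \<Longrightarrow> ob B \<Longrightarrow> dm (eval K B) = prd (exp_obj K B) K"
    "has_exponents C Pr \<Longrightarrow> ob K \<Longrightarrow> ob B \<Longrightarrow> cd (eval K B) = B"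
  using exponential unfolding is_exponential_def by blast+

lemma exp_transpose:
  assumes "has_exponents C Pr" "ob K" "ob B" "ob Z" "ar g" "dm g = prd Z K" "cd g = B"
  obtains h where "ar h" "dm h = Z" "cd h = exp_obj K B" "eval K B \<cdot> \<langle>h \<cdot> p1 Z K, p2 Z K\<rangle> = g"
  using exponential[OF assms(1-3)] assms(4-) unfolding is_exponential_def by blast

end

locale cartesian_doctrine = cartesian_category C Pr
  for C :: "('o,'a) cat" and Pr :: "('o,'a) prods" +
  fixes D :: "('o,'a,'x) doctrine"
  assumes doctrine: "doctrine C D"
begin

lemma reindex_in [simp]: "ar f \<Longrightarrow> dm f = X \<Longrightarrow> x \<in> PO D (cd f) \<Longrightarrow> PM D f x \<in> PO D X"
  using doctrine unfolding doctrine_def by auto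

lemma reindex_comp [simp]:
  "ar f \<Longrightarrow> ar g \<Longrightarrow> cd f = dm g \<Longrightarrow> x \<in> PO D (cd g) \<Longrightarrow> PM D f (PM D g x) = PM D (g \<cdot> f) x"
  using doctrine unfolding doctrine_def by auto

lemma reindex_id [simp]: "ob A \<Longrightarrow> x \<in> PO D A \<Longrightarrow> PM D (idn A) x = x"
  using doctrine unfolding doctrine_def by auto

lemma PL_refl [simp]: "ob A \<Longrightarrow> x \<in> PO D A \<Longrightarrow> PL D A x x"
  using doctrine unfolding doctrine_def by auto

lemma PL_trans:
  "ob A \<Longrightarrow> x \<in> PO D A \<Longrightarrow> y \<in> PO D A \<Longrightarrow> z \<in> PO D A \<Longrightarrow> PL D A x y \<Longrightarrow> PL D A y z \<Longrightarrow> PL D A x z"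
  using doctrine unfolding doctrine_def by blast

lemma reindex_mono:
  "ar f \<Longrightarrow> dm f = X \<Longrightarrow> cd f = Y \<Longrightarrow> x \<in> PO D Y \<Longrightarrow> y \<in> PO D Y \<Longrightarrow> PL D Y x y \<Longrightarrow>
    PL D X (PM D f x) (PM D f y)"
  using doctrine unfolding doctrine_def by blast

abbreviation reps where "reps \<equiv> exT C Pr D"
abbreviation rle where "rle \<equiv> exle C Pr D"
abbreviation cls where "cls \<equiv> exclass C Pr D"
abbreviation PX where "PX \<equiv> Pex C Pr D"

lemma reps_iff [simp]: "(B, a) \<in> reps A \<longleftrightarrow> ob B \<and> a \<in> PO D (prd A B)"
  unfolding exT_def by auto

lemma rle_iff:
  "rle A (B, a) (E, c) \<longleftrightarrow> (\<exists>g\<in>Hom C (prd A B) E. PL D (prd A B) a (PM D \<langle>p1 A B, g\<rangle> c))"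
  unfolding exle_def by simp

lemma rleI:
  "ar g \<Longrightarrow> dm g = prd A B \<Longrightarrow> cd g = E \<Longrightarrow> PL D (prd A B) a (PM D \<langle>p1 A B, g\<rangle> c) \<Longrightarrow> rle A (B, a) (E, c)"
  unfolding rle_iff Hom_def by auto

lemma rleE:
  assumes "rle A (B, a) (E, c)"
  obtains g where "ar g" "dm g = prd A B" "cd g = E" "PL D (prd A B) a (PM D \<langle>p1 A B, g\<rangle> c)"
  using assms unfolding rle_iff Hom_def by auto

lemma rle_refl: "ob A \<Longrightarrow> u \<in> reps A \<Longrightarrow> rle A u u"
  by (cases u) (auto intro: rleI[of "p2 A (fst u)"])

lemma rle_trans:
  assumes "ob A" "u \<in> reps A" "v \<in> reps A" "w \<in> reps A" "rle A u v" "rle A v w"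
  shows "rle A u w"
proof -
  obtain B a E b F c where u: "u = (B, a)" and v: "v = (E, b)" and w: "w = (F, c)"
    by (cases u, cases v, cases w) auto
  obtain f where f: "ar f" "dm f = prd A B" "cd f = E" "PL D (prd A B) a (PM D \<langle>p1 A B, f\<rangle> b)"
    using assms(5) unfolding u v by (rule rleE)
  obtain g where g: "ar g" "dm g = prd A E" "cd g = F" "PL D (prd A E) b (PM D \<langle>p1 A E, g\<rangle> c)"
    using assms(6) unfolding v w by (rule rleE)
  have obj: "ob B" "ob E" "ob F" "a \<in> PO D (prd A B)" "b \<in> PO D (prd A E)" "c \<in> PO D (prd A F)"
    using assms u v w by auto
  have "PL D (prd A B) (PM D \<langle>p1 A B, f\<rangle> b) (PM D \<langle>p1 A B, f\<rangle> (PM D \<langle>p1 A E, g\<rangle> c))"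
    by (rule reindex_mono) (use f g obj assms in simp_all)
  then have "PL D (prd A B) (PM D \<langle>p1 A B, f\<rangle> b) (PM D \<langle>p1 A B, g \<cdot> \<langle>p1 A B, f\<rangle>\<rangle> c)"
    using f g obj assms by simp
  then have "PL D (prd A B) a (PM D \<langle>p1 A B, g \<cdot> \<langle>p1 A B, f\<rangle>\<rangle> c)"
    using PL_trans[OF _ _ _ _ f(4)] f g obj assms by auto
  then show ?thesis
    unfolding u w using f g obj assms by (intro rleI) auto
qed

lemma rle_reindexI:
  assumes "ob A" "ob B" "ob E" "x \<in> PO D W" "ar \<phi>" "dm \<phi> = prd A B" "cd \<phi> = W"
    and "ar \<chi>" "dm \<chi> = prd A E" "cd \<chi> = W" "ar g" "dm g = prd A B" "cd g = E" "\<chi> \<cdot> \<langle>p1 A B, g\<rangle> = \<phi>"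
  shows "rle A (B, PM D \<phi> x) (E, PM D \<chi> x)"
  by (rule rleI[OF assms(11-13)]) (use assms in simp)

lemma cls_self: "ob A \<Longrightarrow> u \<in> reps A \<Longrightarrow> u \<in> cls A u"
  unfolding exclass_def using rle_refl by auto

lemma cls_eqI:
  assumes "ob A" "u \<in> reps A" "v \<in> reps A" "rle A u v" "rle A v u"
  shows "cls A u = cls A v"
proof -
  have "w \<in> cls A v" if "w \<in> cls A u" for w
  proof -
    have w: "w \<in> reps A" "rle A u w" "rle A w u"
      using that unfolding exclass_def by auto
    show ?thesis
      using rle_trans[OF assms(1,3,2) w(1) assms(5) w(2)]
        rle_trans[OF assms(1) w(1) assms(2,3) w(3) assms(4)] w(1)
      unfolding exclass_def by simp
  qed
  moreover have "w \<in> cls A u" if "w \<in> cls A v" for w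
  proof -
    have w: "w \<in> reps A" "rle A v w" "rle A w v"
      using that unfolding exclass_def by auto
    show ?thesis
      using rle_trans[OF assms(1,2,3) w(1) assms(4) w(2)]
        rle_trans[OF assms(1) w(1) assms(3,2) w(3) assms(5)] w(1)
      unfolding exclass_def by simp
  qed
  ultimately show ?thesis
    by blast
qed

lemma Pex_PO: "PO PX A = cls A ` reps A"
  unfolding Pex_def by simp

lemma Pex_PL_cls:
  assumes "ob A" "u \<in> reps A" "v \<in> reps A"
  shows "PL PX A (cls A u) (cls A v) \<longleftrightarrow> rle A u v"
proof
  assume "PL PX A (cls A u) (cls A v)"
  then obtain u' v' where "u' \<in> cls A u" "v' \<in> cls A v" and uv': "rle A u' v'"
    unfolding Pex_def by auto
  then have "u' \<in> reps A" "v' \<in> reps A" "rle A u u'" "rle A v' v"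
    unfolding exclass_def by auto
  then show "rle A u v"
    using assms uv' rle_trans[OF assms(1)] by meson
next
  assume "rle A u v"
  then show "PL PX A (cls A u) (cls A v)"
    unfolding Pex_def using cls_self[OF assms(1,2)] cls_self[OF assms(1,3)] by auto
qed

definition reindex_rep :: "'a \<Rightarrow> 'o \<times> 'x \<Rightarrow> 'o \<times> 'x" where
  "reindex_rep f u = (fst u, PM D (times C Pr f (idn (fst u))) (snd u))"

lemma reindex_rep_Pair [simp]: "reindex_rep f (B, a) = (B, PM D (times C Pr f (idn B)) a)"
  unfolding reindex_rep_def by simp

lemma reindex_rep_in: "ar f \<Longrightarrow> u \<in> reps (cd f) \<Longrightarrow> reindex_rep f u \<in> reps (dm f)"
  by (cases u) simp

lemma reindex_rep_mono:
  assumes "ar f" "u \<in> reps (cd f)" "v \<in> reps (cd f)" "rle (cd f) u v"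
  shows "rle (dm f) (reindex_rep f u) (reindex_rep f v)"
proof -
  obtain B a E c where u: "u = (B, a)" and v: "v = (E, c)"
    by (cases u, cases v) auto
  obtain g where g: "ar g" "dm g = prd (cd f) B" "cd g = E"
    "PL D (prd (cd f) B) a (PM D \<langle>p1 (cd f) B, g\<rangle> c)"
    using assms(4) unfolding u v by (rule rleE)
  have obj: "ob B" "ob E" "a \<in> PO D (prd (cd f) B)" "c \<in> PO D (prd (cd f) E)"
    using assms u v by auto
  let ?h = "\<langle>f \<cdot> p1 (dm f) B, p2 (dm f) B\<rangle>"
  have "PL D (prd (dm f) B) (PM D ?h a) (PM D ?h (PM D \<langle>p1 (cd f) B, g\<rangle> c))"
    by (rule reindex_mono) (use g obj assms in simp_all)
  then have "PL D (prd (dm f) B) (PM D ?h a)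
      (PM D \<langle>p1 (dm f) B, g \<cdot> ?h\<rangle> (PM D \<langle>f \<cdot> p1 (dm f) E, p2 (dm f) E\<rangle> c))"
    using g obj assms by simp
  then show ?thesis
    unfolding u v reindex_rep_Pair using g obj assms by (intro rleI[of "g \<cdot> ?h"]) simp_all
qed

definition class_map :: "'o \<Rightarrow> ('o \<times> 'x \<Rightarrow> 'o \<times> 'x) \<Rightarrow> ('o \<times> 'x) set \<Rightarrow> ('o \<times> 'x) set" where
  "class_map A F S = (\<Union>w\<in>S. cls A (F w))"

lemma Pex_PM: "PM PX f = class_map (dm f) (reindex_rep f)"
  unfolding Pex_def class_map_def reindex_rep_def by simp

lemma class_map_cls:
  assumes "ob X" "ob A" and F_in: "\<And>u. u \<in> reps X \<Longrightarrow> F u \<in> reps A"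
    and F_mono: "\<And>u u'. u \<in> reps X \<Longrightarrow> u' \<in> reps X \<Longrightarrow> rle X u u' \<Longrightarrow> rle A (F u) (F u')"
    and "u \<in> reps X"
  shows "class_map A F (cls X u) = cls A (F u)"
proof -
  have "cls A (F w) = cls A (F u)" if "w \<in> cls X u" for w
  proof -
    have w: "w \<in> reps X" "rle X u w" "rle X w u"
      using that unfolding exclass_def by auto
    show ?thesis
      by (rule cls_eqI[OF assms(2) F_in[OF w(1)] F_in[OF assms(5)] F_mono[OF w(1) assms(5) w(3)]
            F_mono[OF assms(5) w(1) w(2)]])
  qed
  then show ?thesis
    unfolding class_map_def using cls_self[OF assms(1,5)] by blast
qed

lemma Pex_PM_cls:
  assumes "ar f" "u \<in> reps (cd f)"
  shows "PM PX f (cls (cd f) u) = cls (dm f) (reindex_rep f u)"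
  unfolding Pex_PM using assms reindex_rep_in reindex_rep_mono by (intro class_map_cls) simp_all

lemma class_map_left_adjoint:
  assumes p: "ar p" "dm p = X" "cd p = A"
    and F_in: "\<And>u. u \<in> reps X \<Longrightarrow> F u \<in> reps A"
    and adj: "\<And>u v. u \<in> reps X \<Longrightarrow> v \<in> reps A \<Longrightarrow> rle A (F u) v \<longleftrightarrow> rle X u (reindex_rep p v)"
  shows "\<And>u. u \<in> reps X \<Longrightarrow> class_map A F (cls X u) = cls A (F u)"
    and "is_left_adj PX p X A (class_map A F)"
proof -
  have obj: "ob X" "ob A"
    using p by auto
  have reindex_in: "reindex_rep p v \<in> reps X" if "v \<in> reps A" for v
    using reindex_rep_in[of p v] p that by simp
  have F_mono: "rle A (F u) (F u')" if "u \<in> reps X" "u' \<in> reps X" "rle X u u'" for u u'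
  proof -
    have "rle X u' (reindex_rep p (F u'))"
      using adj[OF that(2) F_in[OF that(2)]] rle_refl[OF obj(2) F_in[OF that(2)]] by simp
    then have "rle X u (reindex_rep p (F u'))"
      by (rule rle_trans[OF obj(1) that(1,2) reindex_in[OF F_in[OF that(2)]] that(3)])
    then show ?thesis
      using adj[OF that(1) F_in[OF that(2)]] by simp
  qed
  show cls_eq: "class_map A F (cls X u) = cls A (F u)" if "u \<in> reps X" for u
    by (rule class_map_cls[OF obj F_in F_mono that])
  show "is_left_adj PX p X A (class_map A F)"
    unfolding is_left_adj_def Pex_PO
  proof (intro conjI ballI)
    fix x assume "x \<in> cls X ` reps X"
    then obtain u where u: "u \<in> reps X" "x = cls X u"
      by auto
    then show "class_map A F x \<in> cls A ` reps A"
      using cls_eq F_in by auto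
    fix a assume "a \<in> cls A ` reps A"
    then obtain v where v: "v \<in> reps A" "a = cls A v"
      by auto
    have "PL PX A (class_map A F x) a \<longleftrightarrow> rle A (F u) v"
      unfolding u(2) cls_eq[OF u(1)] v(2) by (rule Pex_PL_cls[OF obj(2) F_in[OF u(1)] v(1)])
    also have "\<dots> \<longleftrightarrow> rle X u (reindex_rep p v)"
      by (rule adj[OF u(1) v(1)])
    also have "\<dots> \<longleftrightarrow> PL PX X x (PM PX p a)"
      using Pex_PM_cls[of p v] Pex_PL_cls[OF obj(1) u(1) reindex_in[OF v(1)]] p u v by simp
    finally show "PL PX A (class_map A F x) a \<longleftrightarrow> PL PX X x (PM PX p a)" .
  qed
qed

lemma class_map_right_adjoint:
  assumes p: "ar p" "dm p = X" "cd p = A"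
    and F_in: "\<And>u. u \<in> reps X \<Longrightarrow> F u \<in> reps A"
    and adj: "\<And>u v. u \<in> reps X \<Longrightarrow> v \<in> reps A \<Longrightarrow> rle X (reindex_rep p v) u \<longleftrightarrow> rle A v (F u)"
  shows "\<And>u. u \<in> reps X \<Longrightarrow> class_map A F (cls X u) = cls A (F u)"
    and "is_right_adj PX p X A (class_map A F)"
proof -
  have obj: "ob X" "ob A"
    using p by auto
  have reindex_in: "reindex_rep p v \<in> reps X" if "v \<in> reps A" for v
    using reindex_rep_in[of p v] p that by simp
  have F_mono: "rle A (F u) (F u')" if "u \<in> reps X" "u' \<in> reps X" "rle X u u'" for u u'
  proof -
    have "rle X (reindex_rep p (F u)) u"
      using adj[OF that(1) F_in[OF that(1)]] rle_refl[OF obj(2) F_in[OF that(1)]] by simp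
    then have "rle X (reindex_rep p (F u)) u'"
      by (rule rle_trans[OF obj(1) reindex_in[OF F_in[OF that(1)]] that(1,2) _ that(3)])
    then show ?thesis
      using adj[OF that(2) F_in[OF that(1)]] by simp
  qed
  show cls_eq: "class_map A F (cls X u) = cls A (F u)" if "u \<in> reps X" for u
    by (rule class_map_cls[OF obj F_in F_mono that])
  show "is_right_adj PX p X A (class_map A F)"
    unfolding is_right_adj_def Pex_PO
  proof (intro conjI ballI)
    fix x assume "x \<in> cls X ` reps X"
    then obtain u where u: "u \<in> reps X" "x = cls X u"
      by auto
    then show "class_map A F x \<in> cls A ` reps A"
      using cls_eq F_in by auto
    fix a assume "a \<in> cls A ` reps A"
    then obtain v where v: "v \<in> reps A" "a = cls A v"
      by auto
    have "PL PX X (PM PX p a) x \<longleftrightarrow> rle X (reindex_rep p v) u"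
      using Pex_PM_cls[of p v] Pex_PL_cls[OF obj(1) reindex_in[OF v(1)] u(1)] p u v by simp
    also have "\<dots> \<longleftrightarrow> rle A v (F u)"
      by (rule adj[OF u(1) v(1)])
    also have "\<dots> \<longleftrightarrow> PL PX A a (class_map A F x)"
      unfolding u(2) cls_eq[OF u(1)] v(2)
        by (rule Pex_PL_cls[OF obj(2) v(1) F_in[OF u(1)], symmetric])
    finally show "PL PX X (PM PX p a) x \<longleftrightarrow> PL PX A a (class_map A F x)" .
  qed
qed

lemma class_map_beck_chevalley:
  assumes f: "ar f" "dm f = A'" "cd f = A" and f': "ar f'" "dm f' = X'" "cd f' = X"
    and F_in: "\<And>u. u \<in> reps X \<Longrightarrow> F u \<in> reps A"
    and F'_in: "\<And>u. u \<in> reps X' \<Longrightarrow> F' u \<in> reps A'"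
    and F_cls: "\<And>u. u \<in> reps X \<Longrightarrow> class_map A F (cls X u) = cls A (F u)"
    and F'_cls: "\<And>u. u \<in> reps X' \<Longrightarrow> class_map A' F' (cls X' u) = cls A' (F' u)"
    and BC: "\<And>u. u \<in> reps X \<Longrightarrow> rle A' (F' (reindex_rep f' u)) (reindex_rep f (F u)) \<and>
      rle A' (reindex_rep f (F u)) (F' (reindex_rep f' u))"
    and x: "x \<in> PO PX X"
  shows "class_map A' F' (PM PX f' x) = PM PX f (class_map A F x)"
proof -
  obtain u where u: "u \<in> reps X" "x = cls X u"
    using x unfolding Pex_PO by auto
  have u': "reindex_rep f' u \<in> reps X'"
    using reindex_rep_in[of f' u] f' u by simp
  have Fu: "reindex_rep f (F u) \<in> reps A'"
    using reindex_rep_in[of f "F u"] f F_in[OF u(1)] by simp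
  have "class_map A' F' (PM PX f' x) = cls A' (F' (reindex_rep f' u))"
    using Pex_PM_cls[of f' u] f' u F'_cls[OF u'] by simp
  also have "\<dots> = cls A' (reindex_rep f (F u))"
    using cls_eqI[OF _ F'_in[OF u'] Fu] BC[OF u(1)] f by auto
  also have "\<dots> = PM PX f (class_map A F x)"
    using Pex_PM_cls[of f "F u"] f F_in[OF u(1)] F_cls[OF u(1)] u(2) by simp
  finally show ?thesis .
qed

lemma projection_beck_chevalley:
  fixes E :: "'a \<Rightarrow> 'o \<times> 'x \<Rightarrow> 'o \<times> 'x"
  assumes E_in: "\<And>p X A u. is_proj C Pr p X A \<Longrightarrow> u \<in> reps X \<Longrightarrow> E p u \<in> reps A"
    and E_cls: "\<And>p X A u. is_proj C Pr p X A \<Longrightarrow> u \<in> reps X \<Longrightarrow>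
      class_map A (E p) (cls X u) = cls A (E p u)"
    and E_BC: "\<And>u. u \<in> reps X \<Longrightarrow> rle A' (E p' (reindex_rep f' u)) (reindex_rep f (E p u)) \<and>
      rle A' (reindex_rep f (E p u)) (E p' (reindex_rep f' u))"
    and proj: "is_proj C Pr p X A" and proj': "is_proj C Pr p' X' A'"
    and "f \<in> Hom C A' A" "f' \<in> Hom C X' X" "x \<in> PO PX X"
  shows "class_map (cd p') (E p') (PM PX f' x) = PM PX f (class_map (cd p) (E p) x)"
proof -
  have f: "ar f" "dm f = A'" "cd f = A" and f': "ar f'" "dm f' = X'" "cd f' = X"
    using assms unfolding Hom_def by auto
  show ?thesis
    using class_map_beck_chevalley[OF f f' E_in[OF proj] E_in[OF proj'] E_cls[OF proj]
      E_cls[OF proj'] E_BC]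
      \<open>x \<in> PO PX X\<close> is_proj_arr(3)[OF proj] is_proj_arr(3)[OF proj'] by simp
qed

lemma existential_PexI:
  fixes E :: "'o \<Rightarrow> 'o \<Rightarrow> 'a \<Rightarrow> 'o \<times> 'x \<Rightarrow> 'o \<times> 'x"
  assumes E_in: "\<And>X A K p q s u. product_split X A K p q s \<Longrightarrow> u \<in> reps X \<Longrightarrow> E A K s u \<in> reps A"
    and E_adj: "\<And>X A K p q s u v. product_split X A K p q s \<Longrightarrow> u \<in> reps X \<Longrightarrow> v \<in> reps A \<Longrightarrow>
      rle A (E A K s u) v \<longleftrightarrow> rle X u (reindex_rep p v)"
    and E_BC: "\<And>X A K p q s X' A' K' p' q' s' f f' u.
      product_split X A K p q s \<Longrightarrow> product_split X' A' K' p' q' s' \<Longrightarrow>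
      ar f \<Longrightarrow> dm f = A' \<Longrightarrow> cd f = A \<Longrightarrow> ar f' \<Longrightarrow> dm f' = X' \<Longrightarrow> cd f' = X \<Longrightarrow>
      pullback C p' f' p f \<Longrightarrow> u \<in> reps X \<Longrightarrow>
      rle A' (E A' K' s' (reindex_rep f' u)) (reindex_rep f (E A K s u)) \<and>
      rle A' (reindex_rep f (E A K s u)) (E A' K' s' (reindex_rep f' u))"
  shows "existential C Pr PX"
proof -
  define F where "F p = E (cd p) (fst (proj_split p)) (snd (snd (proj_split p)))" for p
  have F_in: "F p u \<in> reps A" if "is_proj C Pr p X A" "u \<in> reps X" for p X A u
    using E_in[OF proj_split[OF that(1)] that(2)] is_proj_arr(3)[OF that(1)] unfolding F_def by simp
  have F_adj: "rle A (F p u) v \<longleftrightarrow> rle X u (reindex_rep p v)"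
    if "is_proj C Pr p X A" "u \<in> reps X" "v \<in> reps A" for p X A u v
    using E_adj[OF proj_split[OF that(1)] that(2,3)] is_proj_arr(3)[OF that(1)] unfolding F_def
      by simp
  have adj: "is_left_adj PX p X A (class_map A (F p))" if "is_proj C Pr p X A" for p X A
    by (rule class_map_left_adjoint(2)[OF is_proj_arr(1-3)[OF that]])
      (use F_in[OF that] F_adj[OF that] in auto)
  have F_cls: "class_map A (F p) (cls X u) = cls A (F p u)"
    if "is_proj C Pr p X A" "u \<in> reps X" for p X A u
    by (rule class_map_left_adjoint(1)[OF is_proj_arr(1-3)[OF that(1)]])
      (use F_in[OF that(1)] F_adj[OF that(1)] that in auto)
  show ?thesis
    unfolding existential_def
  proof (intro exI[of _ "\<lambda>p. class_map (cd p) (F p)"] conjI allI impI ballI)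
    fix p X A
    assume "is_proj C Pr p X A"
    then show "is_left_adj PX p X A (class_map (cd p) (F p))"
      using adj is_proj_arr(3) by simp
  next
    fix p X A p' X' A' f f' x
    assume "is_proj C Pr p X A \<and> is_proj C Pr p' X' A' \<and> f \<in> Hom C A' A \<and> f' \<in> Hom C X' X \<and>
      pullback C p' f' p f" "x \<in> PO PX X"
    moreover have "rle A' (F p' (reindex_rep f' u)) (reindex_rep f (F p u)) \<and>
        rle A' (reindex_rep f (F p u)) (F p' (reindex_rep f' u))"
      if "is_proj C Pr p X A" "is_proj C Pr p' X' A'" "f \<in> Hom C A' A" "f' \<in> Hom C X' X"
        "pullback C p' f' p f" "u \<in> reps X" for u
      using E_BC[OF proj_split[OF that(1)] proj_split[OF that(2)]] that is_proj_arr(3)[OF that(1)]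
        is_proj_arr(3)[OF that(2)] unfolding F_def Hom_def by simp
    ultimately show "class_map (cd p') (F p') (PM PX f' x) = PM PX f (class_map (cd p) (F p) x)"
      by (intro projection_beck_chevalley[OF F_in F_cls]) auto
  qed
qed

lemma universal_PexI:
  fixes E :: "'o \<Rightarrow> 'o \<Rightarrow> 'a \<Rightarrow> 'o \<times> 'x \<Rightarrow> 'o \<times> 'x"
  assumes E_in: "\<And>X A K p q s u. product_split X A K p q s \<Longrightarrow> u \<in> reps X \<Longrightarrow> E A K s u \<in> reps A"
    and E_adj: "\<And>X A K p q s u v. product_split X A K p q s \<Longrightarrow> u \<in> reps X \<Longrightarrow> v \<in> reps A \<Longrightarrow>
      rle X (reindex_rep p v) u \<longleftrightarrow> rle A v (E A K s u)"
    and E_BC: "\<And>X A K p q s X' A' K' p' q' s' f f' u.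
      product_split X A K p q s \<Longrightarrow> product_split X' A' K' p' q' s' \<Longrightarrow>
      ar f \<Longrightarrow> dm f = A' \<Longrightarrow> cd f = A \<Longrightarrow> ar f' \<Longrightarrow> dm f' = X' \<Longrightarrow> cd f' = X \<Longrightarrow>
      pullback C p' f' p f \<Longrightarrow> u \<in> reps X \<Longrightarrow>
      rle A' (E A' K' s' (reindex_rep f' u)) (reindex_rep f (E A K s u)) \<and>
      rle A' (reindex_rep f (E A K s u)) (E A' K' s' (reindex_rep f' u))"
  shows "universal C Pr PX"
proof -
  define F where "F p = E (cd p) (fst (proj_split p)) (snd (snd (proj_split p)))" for p
  have F_in: "F p u \<in> reps A" if "is_proj C Pr p X A" "u \<in> reps X" for p X A u
    using E_in[OF proj_split[OF that(1)] that(2)] is_proj_arr(3)[OF that(1)] unfolding F_def by simp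
  have F_adj: "rle X (reindex_rep p v) u \<longleftrightarrow> rle A v (F p u)"
    if "is_proj C Pr p X A" "u \<in> reps X" "v \<in> reps A" for p X A u v
    using E_adj[OF proj_split[OF that(1)] that(2,3)] is_proj_arr(3)[OF that(1)] unfolding F_def
      by simp
  have adj: "is_right_adj PX p X A (class_map A (F p))" if "is_proj C Pr p X A" for p X A
    by (rule class_map_right_adjoint(2)[OF is_proj_arr(1-3)[OF that]])
      (use F_in[OF that] F_adj[OF that] in auto)
  have F_cls: "class_map A (F p) (cls X u) = cls A (F p u)"
    if "is_proj C Pr p X A" "u \<in> reps X" for p X A u
    by (rule class_map_right_adjoint(1)[OF is_proj_arr(1-3)[OF that(1)]])
      (use F_in[OF that(1)] F_adj[OF that(1)] that in auto)
  show ?thesis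
    unfolding universal_def
  proof (intro exI[of _ "\<lambda>p. class_map (cd p) (F p)"] conjI allI impI ballI)
    fix p X A
    assume "is_proj C Pr p X A"
    then show "is_right_adj PX p X A (class_map (cd p) (F p))"
      using adj is_proj_arr(3) by simp
  next
    fix p X A p' X' A' f f' x
    assume "is_proj C Pr p X A \<and> is_proj C Pr p' X' A' \<and> f \<in> Hom C A' A \<and> f' \<in> Hom C X' X \<and>
      pullback C p' f' p f" "x \<in> PO PX X"
    moreover have "rle A' (F p' (reindex_rep f' u)) (reindex_rep f (F p u)) \<and>
        rle A' (reindex_rep f (F p u)) (F p' (reindex_rep f' u))"
      if "is_proj C Pr p X A" "is_proj C Pr p' X' A'" "f \<in> Hom C A' A" "f' \<in> Hom C X' X"
        "pullback C p' f' p f" "u \<in> reps X" for u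
      using E_BC[OF proj_split[OF that(1)] proj_split[OF that(2)]] that is_proj_arr(3)[OF that(1)]
        is_proj_arr(3)[OF that(2)] unfolding F_def Hom_def by simp
    ultimately show "class_map (cd p') (F p') (PM PX f' x) = PM PX f (class_map (cd p) (F p) x)"
      by (intro projection_beck_chevalley[OF F_in F_cls]) auto
  qed
qed

definition split_assoc :: "'o \<Rightarrow> 'o \<Rightarrow> 'o \<Rightarrow> 'a \<Rightarrow> 'a" where
  "split_assoc A K B s =
     \<langle>s \<cdot> \<langle>p1 A (prd K B), p1 K B \<cdot> p2 A (prd K B)\<rangle>, p2 K B \<cdot> p2 A (prd K B)\<rangle>"

definition exists_rep :: "'o \<Rightarrow> 'o \<Rightarrow> 'a \<Rightarrow> 'o \<times> 'x \<Rightarrow> 'o \<times> 'x" where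
  "exists_rep A K s u = (prd K (fst u), PM D (split_assoc A K (fst u) s) (snd u))"

lemma split_assoc_arr:
  assumes "product_split X A K p q s" "ob B"
  shows "ar (split_assoc A K B s)" "dm (split_assoc A K B s) = prd A (prd K B)"
    "cd (split_assoc A K B s) = prd X B"
  using assms product_split_arr[OF assms(1)] unfolding split_assoc_def by simp_all

lemma exists_rep_in: "product_split X A K p q s \<Longrightarrow> u \<in> reps X \<Longrightarrow> exists_rep A K s u \<in> reps A"
  unfolding exists_rep_def using split_assoc_arr product_split_arr by (cases u) simp

lemma exists_rep_adj:
  assumes split: "product_split X A K p q s" and u: "u \<in> reps X" and v: "v \<in> reps A"
  shows "rle A (exists_rep A K s u) v \<longleftrightarrow> rle X u (reindex_rep p v)"
proof -
  obtain B a E c where uv: "u = (B, a)" "v = (E, c)"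
    by (cases u, cases v) auto
  note arr = product_split_arr[OF split] and comp = product_split_comp[OF split]
    and pair = product_split_pair[OF split]
  have obj: "ob B" "ob E" "a \<in> PO D (prd X B)" "c \<in> PO D (prd A E)"
    using u v uv by auto
  let ?\<psi> = "\<langle>s \<cdot> \<langle>p1 A (prd K B), p1 K B \<cdot> p2 A (prd K B)\<rangle>, p2 K B \<cdot> p2 A (prd K B)\<rangle>"
  let ?\<psi>' = "\<langle>p \<cdot> p1 X B, \<langle>q \<cdot> p1 X B, p2 X B\<rangle>\<rangle>"
  have inverse: "?\<psi> \<cdot> ?\<psi>' = idn (prd X B)"
    using arr obj comp pair by simp
  show ?thesis
    unfolding uv exists_rep_def fst_conv snd_conv reindex_rep_Pair split_assoc_def
  proof
    assume "rle A (prd K B, PM D ?\<psi> a) (E, c)"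
    then obtain g where g: "ar g" "dm g = prd A (prd K B)" "cd g = E"
      "PL D (prd A (prd K B)) (PM D ?\<psi> a) (PM D \<langle>p1 A (prd K B), g\<rangle> c)"
      by (rule rleE)
    have "PL D (prd X B) (PM D ?\<psi>' (PM D ?\<psi> a)) (PM D ?\<psi>' (PM D \<langle>p1 A (prd K B), g\<rangle> c))"
      by (rule reindex_mono) (use g arr obj in simp_all)
    then have "PL D (prd X B) (PM D (?\<psi> \<cdot> ?\<psi>') a) (PM D (\<langle>p1 A (prd K B), g\<rangle> \<cdot> ?\<psi>') c)"
      using g arr obj by (subst (asm) reindex_comp, simp_all)+
    then have "PL D (prd X B) a (PM D (\<langle>p1 A (prd K B), g\<rangle> \<cdot> ?\<psi>') c)"
      unfolding inverse using obj arr by simp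
    then show "rle X (B, a) (E, PM D (times C Pr p (idn E)) c)"
      using g obj arr by (intro rleI[of "g \<cdot> ?\<psi>'"]) simp_all
  next
    assume "rle X (B, a) (E, PM D (times C Pr p (idn E)) c)"
    then obtain g where g: "ar g" "dm g = prd X B" "cd g = E"
      "PL D (prd X B) a (PM D \<langle>p1 X B, g\<rangle> (PM D (times C Pr p (idn E)) c))"
      by (rule rleE)
    have "PL D (prd A (prd K B)) (PM D ?\<psi> a)
        (PM D ?\<psi> (PM D \<langle>p1 X B, g\<rangle> (PM D (times C Pr p (idn E)) c)))"
      by (rule reindex_mono) (use g arr obj in simp_all)
    then show "rle A (prd K B, PM D ?\<psi> a) (E, c)"
      using g obj arr comp by (intro rleI[of "g \<cdot> ?\<psi>"]) simp_all
  qed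
qed

lemma exists_rep_reindex_rep:
  assumes split': "product_split X' A' K' p' q' s'" and f': "ar f'" "dm f' = X'" "cd f' = X"
    and u: "(B, a) \<in> reps X"
  shows "exists_rep A' K' s' (reindex_rep f' (B, a)) =
    (prd K' B, PM D (\<langle>f' \<cdot> p1 X' B, p2 X' B\<rangle> \<cdot> split_assoc A' K' B s') a)"
  using u f' product_split_arr[OF split'] split_assoc_arr[OF split', of B] unfolding exists_rep_def
    by simp

lemma reindex_rep_exists_rep:
  assumes split: "product_split X A K p q s" and f: "ar f" "dm f = A'" "cd f = A"
    and u: "(B, a) \<in> reps X"
  shows "reindex_rep f (exists_rep A K s (B, a)) =
    (prd K B, PM D (split_assoc A K B s \<cdot> \<langle>f \<cdot> p1 A' (prd K B), p2 A' (prd K B)\<rangle>) a)"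
  using u f arr_obj(1)[OF f(1)] product_split_arr[OF split] split_assoc_arr[OF split, of B]
  unfolding exists_rep_def by simp

lemma exists_rep_reindex_le:
  assumes split: "product_split X A K p q s" and split': "product_split X' A' K' p' q' s'"
    and f: "ar f" "dm f = A'" "cd f = A" and f': "ar f'" "dm f' = X'" "cd f' = X"
    and pb: "pullback C p' f' p f" and u: "u \<in> reps X"
  shows "rle A' (exists_rep A' K' s' (reindex_rep f' u)) (reindex_rep f (exists_rep A K s u))"
proof -
  obtain B a where u_def: "u = (B, a)"
    by (cases u) auto
  note arr = product_split_arr[OF split] and arr' = product_split_arr[OF split']
  have obj: "ob B" "a \<in> PO D (prd X B)" "ob A'"
    using u u_def f by auto
  let ?w = "s' \<cdot> \<langle>p1 A' (prd K' B), p1 K' B \<cdot> p2 A' (prd K' B)\<rangle>"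
  have w: "ar ?w" "dm ?w = prd A' (prd K' B)" "cd ?w = X'" "p' \<cdot> ?w = p1 A' (prd K' B)"
    using arr' obj product_split_comp(1)[OF split'] by simp_all
  have "p \<cdot> (f' \<cdot> ?w) = f \<cdot> p1 A' (prd K' B)"
    using pullback_commutes[OF pb] comp_assoc[of ?w f' p] comp_assoc[of ?w p' f] w f f' arr arr'
      by simp
  then have s_pair: "s \<cdot> \<langle>f \<cdot> p1 A' (prd K' B), q \<cdot> (f' \<cdot> ?w)\<rangle> = f' \<cdot> ?w"
    using product_split_pair[OF split, of "f' \<cdot> ?w"] w f' by simp
  let ?g = "\<langle>q \<cdot> (f' \<cdot> ?w), p2 K' B \<cdot> p2 A' (prd K' B)\<rangle>"
  have "(split_assoc A K B s \<cdot> \<langle>f \<cdot> p1 A' (prd K B), p2 A' (prd K B)\<rangle>) \<cdot> \<langle>p1 A' (prd K' B), ?g\<rangle> =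
      \<langle>f' \<cdot> p1 X' B, p2 X' B\<rangle> \<cdot> split_assoc A' K' B s'"
    using arr arr' f f' obj w s_pair unfolding split_assoc_def by simp
  then show ?thesis
    unfolding u_def exists_rep_reindex_rep[OF split' f' u[unfolded u_def]]
      reindex_rep_exists_rep[OF split f u[unfolded u_def]]
    by (rule rle_reindexI[OF _ _ _ obj(2), rotated -1])
      (use arr arr' f f' obj w split_assoc_arr[OF split obj(1)] split_assoc_arr[OF split' obj(1)] in
        simp_all)
qed

lemma reindex_exists_rep_le:
  assumes split: "product_split X A K p q s" and split': "product_split X' A' K' p' q' s'"
    and f: "ar f" "dm f = A'" "cd f = A" and f': "ar f'" "dm f' = X'" "cd f' = X"
    and pb: "pullback C p' f' p f" and u: "u \<in> reps X"
  shows "rle A' (reindex_rep f (exists_rep A K s u)) (exists_rep A' K' s' (reindex_rep f' u))"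
proof -
  obtain B a where u_def: "u = (B, a)"
    by (cases u) auto
  note arr = product_split_arr[OF split] and arr' = product_split_arr[OF split']
  have obj: "ob B" "a \<in> PO D (prd X B)" "ob A'"
    using u u_def f by auto
  let ?h = "s \<cdot> \<langle>f \<cdot> p1 A' (prd K B), p1 K B \<cdot> p2 A' (prd K B)\<rangle>"
  obtain m where m: "ar m" "dm m = prd A' (prd K B)" "cd m = X'" "p' \<cdot> m = p1 A' (prd K B)"
    "f' \<cdot> m = ?h"
    using pullback_factor[OF pb, of "prd A' (prd K B)" "p1 A' (prd K B)" ?h]
    using arr arr' f f' obj product_split_comp(1)[OF split] by auto
  have s'_pair: "s' \<cdot> \<langle>p1 A' (prd K B), q' \<cdot> m\<rangle> = m"
    using product_split_pair[OF split', of m] m by simp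
  let ?g = "\<langle>q' \<cdot> m, p2 K B \<cdot> p2 A' (prd K B)\<rangle>"
  have "(\<langle>f' \<cdot> p1 X' B, p2 X' B\<rangle> \<cdot> split_assoc A' K' B s') \<cdot> \<langle>p1 A' (prd K B), ?g\<rangle> =
      split_assoc A K B s \<cdot> \<langle>f \<cdot> p1 A' (prd K B), p2 A' (prd K B)\<rangle>"
    using arr arr' f f' obj m s'_pair unfolding split_assoc_def by simp
  then show ?thesis
    unfolding u_def exists_rep_reindex_rep[OF split' f' u[unfolded u_def]]
      reindex_rep_exists_rep[OF split f u[unfolded u_def]]
    by (rule rle_reindexI[OF _ _ _ obj(2), rotated -1])
      (use arr arr' f f' obj m split_assoc_arr[OF split obj(1)] split_assoc_arr[OF split' obj(1)] in
        simp_all)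
qed

theorem Pex_existential: "existential C Pr PX"
  by (rule existential_PexI[of exists_rep])
    (fact exists_rep_in, fact exists_rep_adj, simp add: exists_rep_reindex_le reindex_exists_rep_le)

end

locale universal_doctrine = cartesian_doctrine C Pr D
  for C :: "('o,'a) cat" and Pr :: "('o,'a) prods" and D :: "('o,'a,'x) doctrine" +
  fixes R :: "'a \<Rightarrow> 'x \<Rightarrow> 'x"
  assumes R_adj: "\<And>p X A. is_proj C Pr p X A \<Longrightarrow> is_right_adj D p X A (R p)"
    and R_beck_chevalley: "\<And>p X A p' X' A' f f'. is_proj C Pr p X A \<Longrightarrow> is_proj C Pr p' X' A' \<Longrightarrow>
      f \<in> Hom C A' A \<Longrightarrow> f' \<in> Hom C X' X \<Longrightarrow> pullback C p' f' p f \<Longrightarrow>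
      (\<forall>x\<in>PO D X. R p' (PM D f' x) = PM D f (R p x))"
    and exponents: "has_exponents C Pr"
begin

definition forall_fst :: "'o \<Rightarrow> 'o \<Rightarrow> 'x \<Rightarrow> 'x" where
  "forall_fst Z Y \<phi> = R (p1 Z Y) \<phi>"

lemma is_proj_p1: "ob Z \<Longrightarrow> ob Y \<Longrightarrow> is_proj C Pr (p1 Z Y) (prd Z Y) Z"
  unfolding is_proj_def by auto

lemma forall_fst_in [simp]: "ob Z \<Longrightarrow> ob Y \<Longrightarrow> \<phi> \<in> PO D (prd Z Y) \<Longrightarrow> forall_fst Z Y \<phi> \<in> PO D Z"
  using R_adj[OF is_proj_p1] unfolding is_right_adj_def forall_fst_def by auto

lemma forall_fst_adj:
  "ob Z \<Longrightarrow> ob Y \<Longrightarrow> \<phi> \<in> PO D (prd Z Y) \<Longrightarrow> a \<in> PO D Z \<Longrightarrow>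
    PL D (prd Z Y) (PM D (p1 Z Y) a) \<phi> \<longleftrightarrow> PL D Z a (forall_fst Z Y \<phi>)"
  using R_adj[OF is_proj_p1] unfolding is_right_adj_def forall_fst_def by auto

lemma forall_fst_counit:
  "ob Z \<Longrightarrow> ob Y \<Longrightarrow> \<phi> \<in> PO D (prd Z Y) \<Longrightarrow> PL D (prd Z Y) (PM D (p1 Z Y) (forall_fst Z Y \<phi>)) \<phi>"
  using forall_fst_adj[of Z Y \<phi> "forall_fst Z Y \<phi>"] by simp

lemma forall_fst_reindex:
  assumes "ar h" "dm h = Z'" "cd h = Z" "ob Y" "\<phi> \<in> PO D (prd Z Y)"
  shows "forall_fst Z' Y (PM D \<langle>h \<cdot> p1 Z' Y, p2 Z' Y\<rangle> \<phi>) = PM D h (forall_fst Z Y \<phi>)"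
proof -
  have obj: "ob Z" "ob Z'"
    using assms by auto
  show ?thesis
    unfolding forall_fst_def
    by (rule R_beck_chevalley[OF is_proj_p1[OF obj(1) assms(4)] is_proj_p1[OF obj(2) assms(4)],
      rule_format])
      (use assms obj pullback_times_id[OF assms(1-4)] in \<open>auto simp: Hom_def\<close>)
qed

lemma rle_forall_fst_iff:
  assumes obj: "ob Z" "ob B" "ob E" "ob K" "\<gamma> \<in> PO D (prd Z B)" "\<phi> \<in> PO D (prd (prd Z E) K)"
  shows "rle Z (B, \<gamma>) (E, forall_fst (prd Z E) K \<phi>) \<longleftrightarrow> (\<exists>k. ar k \<and> dm k = prd Z B \<and> cd k = E \<and>
    PL D (prd (prd Z B) K) (PM D (p1 (prd Z B) K) \<gamma>)
      (PM D \<langle>\<langle>p1 Z B, k\<rangle> \<cdot> p1 (prd Z B) K, p2 (prd Z B) K\<rangle> \<phi>))"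
proof -
  have "PL D (prd Z B) \<gamma> (PM D \<langle>p1 Z B, k\<rangle> (forall_fst (prd Z E) K \<phi>)) \<longleftrightarrow>
      PL D (prd (prd Z B) K) (PM D (p1 (prd Z B) K) \<gamma>)
        (PM D \<langle>\<langle>p1 Z B, k\<rangle> \<cdot> p1 (prd Z B) K, p2 (prd Z B) K\<rangle> \<phi>)"
    if k: "ar k" "dm k = prd Z B" "cd k = E" for k
  proof -
    have "PM D \<langle>p1 Z B, k\<rangle> (forall_fst (prd Z E) K \<phi>) =
        forall_fst (prd Z B) K (PM D \<langle>\<langle>p1 Z B, k\<rangle> \<cdot> p1 (prd Z B) K, p2 (prd Z B) K\<rangle> \<phi>)"
      by (rule forall_fst_reindex[symmetric]) (use k obj in simp_all)
    then show ?thesis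
      using forall_fst_adj k obj by simp
  qed
  then show ?thesis
    unfolding rle_iff Hom_def by auto
qed

lemma rle_forall_fstI:
  assumes obj: "ob Z" "ob E1" "ob K1" "ob E2" "ob K2" "x \<in> PO D W"
    and t1: "ar t1" "dm t1 = prd (prd Z E1) K1" "cd t1 = W"
    and t2: "ar t2" "dm t2 = prd (prd Z E2) K2" "cd t2 = W"
    and k: "ar k" "dm k = prd Z E1" "cd k = E2"
    and n: "ar n" "dm n = prd (prd Z E1) K2" "cd n = K1"
    and eq: "t1 \<cdot> \<langle>p1 (prd Z E1) K2, n\<rangle> = t2 \<cdot> \<langle>\<langle>p1 Z E1, k\<rangle> \<cdot> p1 (prd Z E1) K2, p2 (prd Z E1) K2\<rangle>"
  shows "rle Z (E1, forall_fst (prd Z E1) K1 (PM D t1 x))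
    (E2, forall_fst (prd Z E2) K2 (PM D t2 x))"
proof -
  let ?m = "\<langle>p1 (prd Z E1) K2, n\<rangle>"
  have "PL D (prd (prd Z E1) K1) (PM D (p1 (prd Z E1) K1) (forall_fst (prd Z E1) K1 (PM D t1 x)))
    (PM D t1 x)"
    by (rule forall_fst_counit) (use obj t1 in simp_all)
  then have "PL D (prd (prd Z E1) K2)
    (PM D ?m (PM D (p1 (prd Z E1) K1) (forall_fst (prd Z E1) K1 (PM D t1 x))))
      (PM D ?m (PM D t1 x))"
    by (rule reindex_mono[rotated -1]) (use obj t1 n in simp_all)
  then have "PL D (prd (prd Z E1) K2)
    (PM D (p1 (prd Z E1) K2) (forall_fst (prd Z E1) K1 (PM D t1 x)))
      (PM D (t2 \<cdot> \<langle>\<langle>p1 Z E1, k\<rangle> \<cdot> p1 (prd Z E1) K2, p2 (prd Z E1) K2\<rangle>) x)"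
    using obj t1 n eq[symmetric] by simp
  then show ?thesis
    using obj t1 t2 k by (subst rle_forall_fst_iff) (simp_all, intro exI[of _ k], simp)
qed

definition skolem_map :: "'o \<Rightarrow> 'o \<Rightarrow> 'o \<Rightarrow> 'a \<Rightarrow> 'a" where
  "skolem_map A K B s =
     \<langle>s \<cdot> \<langle>p1 A (exp_obj K B) \<cdot> p1 (prd A (exp_obj K B)) K, p2 (prd A (exp_obj K B)) K\<rangle>,
      eval K B \<cdot> \<langle>p2 A (exp_obj K B) \<cdot> p1 (prd A (exp_obj K B)) K, p2 (prd A (exp_obj K B)) K\<rangle>\<rangle>"

definition forall_rep :: "'o \<Rightarrow> 'o \<Rightarrow> 'a \<Rightarrow> 'o \<times> 'x \<Rightarrow> 'o \<times> 'x" where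
  "forall_rep A K s u =
     (exp_obj K (fst u), forall_fst (prd A (exp_obj K (fst u))) K
       (PM D (skolem_map A K (fst u) s) (snd u)))"

lemma skolem_map_arr:
  assumes "product_split X A K p q s" "ob B"
  shows "ar (skolem_map A K B s)" "dm (skolem_map A K B s) = prd (prd A (exp_obj K B)) K"
    "cd (skolem_map A K B s) = prd X B"
  using assms product_split_arr[OF assms(1)] exponents unfolding skolem_map_def by simp_all

lemma forall_rep_in: "product_split X A K p q s \<Longrightarrow> u \<in> reps X \<Longrightarrow> forall_rep A K s u \<in> reps A"
  unfolding forall_rep_def using skolem_map_arr product_split_arr exponents by (cases u) simp

lemma reindex_rle_imp_rle_forall_rep:
  assumes split: "product_split X A K p q s" and u: "u \<in> reps X" and v: "v \<in> reps A"
    and le: "rle X (reindex_rep p v) u"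
  shows "rle A v (forall_rep A K s u)"
proof -
  obtain B a B' c where uv: "u = (B, a)" "v = (B', c)"
    by (cases u, cases v) auto
  note arr = product_split_arr[OF split]
  have obj: "ob B" "ob B'" "a \<in> PO D (prd X B)" "c \<in> PO D (prd A B')"
    using u v uv by auto
  define E where "E = exp_obj K B"
  define ev where "ev = eval K B"
  note exp = exp_obj[OF exponents arr(12) obj(1), folded E_def]
    eval_arr[OF exponents arr(12) obj(1), folded E_def ev_def]
  let ?t = "skolem_map A K B s"
  obtain g where g: "ar g" "dm g = prd X B'" "cd g = B"
    "PL D (prd X B') (PM D \<langle>p \<cdot> p1 X B', p2 X B'\<rangle> c) (PM D \<langle>p1 X B', g\<rangle> a)"
  proof -
    have "rle X (B', PM D \<langle>p \<cdot> p1 X B', p2 X B'\<rangle> c) (B, a)"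
      using le arr obj unfolding uv by simp
    then show ?thesis
      using that by (rule rleE)
  qed
  let ?j = "\<langle>s \<cdot> \<langle>p1 A B' \<cdot> p1 (prd A B') K, p2 (prd A B') K\<rangle>, p2 A B' \<cdot> p1 (prd A B') K\<rangle>"
  obtain k where k: "ar k" "dm k = prd A B'" "cd k = E"
    "ev \<cdot> \<langle>k \<cdot> p1 (prd A B') K, p2 (prd A B') K\<rangle> = g \<cdot> ?j"
    using exp_transpose[OF exponents arr(12) obj(1), of "prd A B'" "g \<cdot> ?j", folded E_def ev_def] g
      arr obj
    by auto
  have "PL D (prd (prd A B') K) (PM D ?j (PM D \<langle>p \<cdot> p1 X B', p2 X B'\<rangle> c))
    (PM D ?j (PM D \<langle>p1 X B', g\<rangle> a))"
    by (rule reindex_mono[OF _ _ _ _ _ g(4)]) (use g arr obj in simp_all)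
  then have "PL D (prd (prd A B') K) (PM D (p1 (prd A B') K) c) (PM D (\<langle>p1 X B', g\<rangle> \<cdot> ?j) a)"
    using g arr obj product_split_comp[OF split] by simp
  moreover have "\<langle>p1 X B', g\<rangle> \<cdot> ?j = ?t \<cdot> \<langle>\<langle>p1 A B', k\<rangle> \<cdot> p1 (prd A B') K, p2 (prd A B') K\<rangle>"
    using g arr obj exp k unfolding skolem_map_def E_def[symmetric] ev_def[symmetric] by simp
  ultimately show ?thesis
    unfolding uv forall_rep_def fst_conv snd_conv E_def[symmetric]
    using k arr obj exp skolem_map_arr[OF split obj(1), folded E_def]
    by (subst rle_forall_fst_iff) (simp_all add: E_def, intro exI[of _ k], simp add: E_def)
qed

lemma rle_forall_rep_imp_reindex_rle:
  assumes split: "product_split X A K p q s" and u: "u \<in> reps X" and v: "v \<in> reps A"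
    and le: "rle A v (forall_rep A K s u)"
  shows "rle X (reindex_rep p v) u"
proof -
  obtain B a B' c where uv: "u = (B, a)" "v = (B', c)"
    by (cases u, cases v) auto
  note arr = product_split_arr[OF split]
  have obj: "ob B" "ob B'" "a \<in> PO D (prd X B)" "c \<in> PO D (prd A B')"
    using u v uv by auto
  define E where "E = exp_obj K B"
  define ev where "ev = eval K B"
  note exp = exp_obj[OF exponents arr(12) obj(1), folded E_def]
    eval_arr[OF exponents arr(12) obj(1), folded E_def ev_def]
  let ?t = "skolem_map A K B s"
  have "\<exists>k. ar k \<and> dm k = prd A B' \<and> cd k = E \<and> PL D (prd (prd A B') K) (PM D (p1 (prd A B') K) c)
      (PM D \<langle>\<langle>p1 A B', k\<rangle> \<cdot> p1 (prd A B') K, p2 (prd A B') K\<rangle> (PM D ?t a))"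
    using le unfolding uv forall_rep_def fst_conv snd_conv E_def[symmetric]
    using arr obj exp skolem_map_arr[OF split obj(1), folded E_def]
      by (subst (asm) rle_forall_fst_iff) (simp_all add: E_def)
  then obtain k where k: "ar k" "dm k = prd A B'" "cd k = E"
    "PL D (prd (prd A B') K) (PM D (p1 (prd A B') K) c)
      (PM D \<langle>\<langle>p1 A B', k\<rangle> \<cdot> p1 (prd A B') K, p2 (prd A B') K\<rangle> (PM D ?t a))"
    by blast
  let ?j = "\<langle>\<langle>p \<cdot> p1 X B', p2 X B'\<rangle>, q \<cdot> p1 X B'\<rangle>"
  let ?g = "ev \<cdot> \<langle>k \<cdot> \<langle>p \<cdot> p1 X B', p2 X B'\<rangle>, q \<cdot> p1 X B'\<rangle>"
  have "PL D (prd X B') (PM D ?j (PM D (p1 (prd A B') K) c))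
      (PM D ?j (PM D \<langle>\<langle>p1 A B', k\<rangle> \<cdot> p1 (prd A B') K, p2 (prd A B') K\<rangle> (PM D ?t a)))"
    by (rule reindex_mono[OF _ _ _ _ _ k(4)])
      (use k arr obj exp skolem_map_arr[OF split obj(1), folded E_def] in simp_all)
  then have "PL D (prd X B') (PM D \<langle>p \<cdot> p1 X B', p2 X B'\<rangle> c)
      (PM D (?t \<cdot> \<langle>\<langle>p1 A B', k\<rangle> \<cdot> p1 (prd A B') K, p2 (prd A B') K\<rangle> \<cdot> ?j) a)"
    using k arr obj exp skolem_map_arr[OF split obj(1), folded E_def] by simp
  moreover have "?t \<cdot> \<langle>\<langle>p1 A B', k\<rangle> \<cdot> p1 (prd A B') K, p2 (prd A B') K\<rangle> \<cdot> ?j = \<langle>p1 X B', ?g\<rangle>"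
    using k arr obj exp product_split_pair[OF split] unfolding skolem_map_def E_def[symmetric]
      ev_def[symmetric]
    by simp
  ultimately show ?thesis
    unfolding uv reindex_rep_Pair using k arr obj exp by (intro rleI[of ?g]) simp_all
qed

lemma forall_rep_adj:
  assumes "product_split X A K p q s" "u \<in> reps X" "v \<in> reps A"
  shows "rle X (reindex_rep p v) u \<longleftrightarrow> rle A v (forall_rep A K s u)"
  using reindex_rle_imp_rle_forall_rep[OF assms] rle_forall_rep_imp_reindex_rle[OF assms] by blast

lemma forall_rep_reindex_rep:
  assumes split': "product_split X' A' K' p' q' s'" and f': "ar f'" "dm f' = X'" "cd f' = X"
    and u: "(B, a) \<in> reps X"
  shows "forall_rep A' K' s' (reindex_rep f' (B, a)) = (exp_obj K' B,
    forall_fst (prd A' (exp_obj K' B)) K'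
      (PM D (\<langle>f' \<cdot> p1 X' B, p2 X' B\<rangle> \<cdot> skolem_map A' K' B s') a))"
  using u f' product_split_arr[OF split'] skolem_map_arr[OF split', of B] unfolding forall_rep_def
    by simp

lemma reindex_rep_forall_rep:
  assumes split: "product_split X A K p q s" and f: "ar f" "dm f = A'" "cd f = A"
    and u: "(B, a) \<in> reps X"
  shows "reindex_rep f (forall_rep A K s (B, a)) = (exp_obj K B,
    forall_fst (prd A' (exp_obj K B)) K (PM D (skolem_map A K B s \<cdot>
      \<langle>\<langle>f \<cdot> p1 A' (exp_obj K B), p2 A' (exp_obj K B)\<rangle> \<cdot> p1 (prd A' (exp_obj K B)) K,
       p2 (prd A' (exp_obj K B)) K\<rangle>) a))"
proof -
  note arr = product_split_arr[OF split] and map = skolem_map_arr[OF split, of B]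
  let ?E = "exp_obj K B"
  have obj: "ob B" "a \<in> PO D (prd X B)" "ob ?E" "ob A'"
    using u arr exponents f by auto
  have "PM D \<langle>f \<cdot> p1 A' ?E, p2 A' ?E\<rangle> (forall_fst (prd A ?E) K (PM D (skolem_map A K B s) a)) =
      forall_fst (prd A' ?E) K (PM D \<langle>\<langle>f \<cdot> p1 A' ?E, p2 A' ?E\<rangle> \<cdot> p1 (prd A' ?E) K, p2 (prd A' ?E) K\<rangle>
        (PM D (skolem_map A K B s) a))"
    by (rule forall_fst_reindex[symmetric]) (use arr f obj map in simp_all)
  then show ?thesis
    unfolding forall_rep_def using arr f obj map by simp
qed

lemma forall_rep_reindex_le:
  assumes split: "product_split X A K p q s" and split': "product_split X' A' K' p' q' s'"
    and f: "ar f" "dm f = A'" "cd f = A" and f': "ar f'" "dm f' = X'" "cd f' = X"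
    and pb: "pullback C p' f' p f" and u: "u \<in> reps X"
  shows "rle A' (forall_rep A' K' s' (reindex_rep f' u)) (reindex_rep f (forall_rep A K s u))"
proof -
  obtain B a where u_def: "u = (B, a)"
    by (cases u) auto
  note arr = product_split_arr[OF split] and arr' = product_split_arr[OF split']
  have obj: "ob B" "a \<in> PO D (prd X B)"
    using u u_def by auto
  define E where "E = exp_obj K B"
  define E' where "E' = exp_obj K' B"
  note exp = exp_obj[OF exponents arr(12) obj(1), folded E_def]
    eval_arr[OF exponents arr(12) obj(1), folded E_def]
    and exp' = exp_obj[OF exponents arr'(12) obj(1), folded E'_def]
      eval_arr[OF exponents arr'(12) obj(1), folded E'_def]
  let ?\<tau>' = "\<langle>f' \<cdot> p1 X' B, p2 X' B\<rangle> \<cdot> skolem_map A' K' B s'"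
  let ?\<tau> = "skolem_map A K B s \<cdot> \<langle>\<langle>f \<cdot> p1 A' E, p2 A' E\<rangle> \<cdot> p1 (prd A' E) K, p2 (prd A' E) K\<rangle>"
  let ?h = "s \<cdot> \<langle>f \<cdot> p1 A' E' \<cdot> p1 (prd A' E') K, p2 (prd A' E') K\<rangle>"
  obtain m where m: "ar m" "dm m = prd (prd A' E') K" "cd m = X'"
    "p' \<cdot> m = p1 A' E' \<cdot> p1 (prd A' E') K" "f' \<cdot> m = ?h"
    using pullback_factor[OF pb, of "prd (prd A' E') K" "p1 A' E' \<cdot> p1 (prd A' E') K" ?h]
    using arr arr' f f' obj exp' product_split_comp(1)[OF split] by auto
  have s'_pair: "s' \<cdot> \<langle>p1 A' E' \<cdot> p1 (prd A' E') K, q' \<cdot> m\<rangle> = m"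
    using product_split_pair[OF split', of m] m by simp
  let ?G = "eval K' B \<cdot> \<langle>p2 A' E' \<cdot> p1 (prd A' E') K, q' \<cdot> m\<rangle>"
  obtain k where k: "ar k" "dm k = prd A' E'" "cd k = E"
    "eval K B \<cdot> \<langle>k \<cdot> p1 (prd A' E') K, p2 (prd A' E') K\<rangle> = ?G"
    using exp_transpose[OF exponents arr(12) obj(1), of "prd A' E'" ?G, folded E_def] arr arr' f obj
      m exp'
    by auto
  have eq: "?\<tau>' \<cdot> \<langle>p1 (prd A' E') K, q' \<cdot> m\<rangle> =
      ?\<tau> \<cdot> \<langle>\<langle>p1 A' E', k\<rangle> \<cdot> p1 (prd A' E') K, p2 (prd A' E') K\<rangle>"
    using arr arr' f f' obj m exp exp' k s'_pair unfolding skolem_map_def E_def[symmetric]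
      E'_def[symmetric]
    by simp
  show ?thesis
    unfolding u_def forall_rep_reindex_rep[OF split' f' u[unfolded u_def]]
      reindex_rep_forall_rep[OF split f u[unfolded u_def]] E_def[symmetric] E'_def[symmetric]
    by (rule rle_forall_fstI[OF _ _ _ _ _ obj(2) _ _ _ _ _ _ k(1-3) _ _ _ eq])
      (use arr arr' f f' obj exp exp' k m skolem_map_arr[OF split obj(1), folded E_def]
        skolem_map_arr[OF split' obj(1), folded E'_def] in simp_all)
qed

lemma reindex_forall_rep_le:
  assumes split: "product_split X A K p q s" and split': "product_split X' A' K' p' q' s'"
    and f: "ar f" "dm f = A'" "cd f = A" and f': "ar f'" "dm f' = X'" "cd f' = X"
    and pb: "pullback C p' f' p f" and u: "u \<in> reps X"
  shows "rle A' (reindex_rep f (forall_rep A K s u)) (forall_rep A' K' s' (reindex_rep f' u))"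
proof -
  obtain B a where u_def: "u = (B, a)"
    by (cases u) auto
  note arr = product_split_arr[OF split] and arr' = product_split_arr[OF split']
  have obj: "ob B" "a \<in> PO D (prd X B)"
    using u u_def by auto
  define E where "E = exp_obj K B"
  define E' where "E' = exp_obj K' B"
  note exp = exp_obj[OF exponents arr(12) obj(1), folded E_def]
    eval_arr[OF exponents arr(12) obj(1), folded E_def]
    and exp' = exp_obj[OF exponents arr'(12) obj(1), folded E'_def]
      eval_arr[OF exponents arr'(12) obj(1), folded E'_def]
  let ?\<tau>' = "\<langle>f' \<cdot> p1 X' B, p2 X' B\<rangle> \<cdot> skolem_map A' K' B s'"
  let ?\<tau> = "skolem_map A K B s \<cdot> \<langle>\<langle>f \<cdot> p1 A' E, p2 A' E\<rangle> \<cdot> p1 (prd A' E) K, p2 (prd A' E) K\<rangle>"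
  let ?w = "s' \<cdot> \<langle>p1 A' E \<cdot> p1 (prd A' E) K', p2 (prd A' E) K'\<rangle>"
  have w: "ar ?w" "dm ?w = prd (prd A' E) K'" "cd ?w = X'" "p' \<cdot> ?w = p1 A' E \<cdot> p1 (prd A' E) K'"
    using arr' obj exp product_split_comp(1)[OF split'] by simp_all
  have "p \<cdot> (f' \<cdot> ?w) = f \<cdot> (p1 A' E \<cdot> p1 (prd A' E) K')"
    using pullback_commutes[OF pb] comp_assoc[of ?w f' p] comp_assoc[of ?w p' f] w f f' arr arr'
      by simp
  then have s_pair: "s \<cdot> \<langle>f \<cdot> (p1 A' E \<cdot> p1 (prd A' E) K'), q \<cdot> (f' \<cdot> ?w)\<rangle> = f' \<cdot> ?w"
    using product_split_pair[OF split, of "f' \<cdot> ?w"] w f' by simp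
  let ?G = "eval K B \<cdot> \<langle>p2 A' E \<cdot> p1 (prd A' E) K', q \<cdot> (f' \<cdot> ?w)\<rangle>"
  obtain k where k: "ar k" "dm k = prd A' E" "cd k = E'"
    "eval K' B \<cdot> \<langle>k \<cdot> p1 (prd A' E) K', p2 (prd A' E) K'\<rangle> = ?G"
    using exp_transpose[OF exponents arr'(12) obj(1), of "prd A' E" ?G, folded E'_def] arr arr' f f'
      obj w exp
    by auto
  have eq: "?\<tau> \<cdot> \<langle>p1 (prd A' E) K', q \<cdot> (f' \<cdot> ?w)\<rangle> =
      ?\<tau>' \<cdot> \<langle>\<langle>p1 A' E, k\<rangle> \<cdot> p1 (prd A' E) K', p2 (prd A' E) K'\<rangle>"
    using arr arr' f f' obj w exp exp' k s_pair unfolding skolem_map_def E_def[symmetric]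
      E'_def[symmetric]
    by simp
  show ?thesis
    unfolding u_def forall_rep_reindex_rep[OF split' f' u[unfolded u_def]]
      reindex_rep_forall_rep[OF split f u[unfolded u_def]] E_def[symmetric] E'_def[symmetric]
    by (rule rle_forall_fstI[OF _ _ _ _ _ obj(2) _ _ _ _ _ _ k(1-3) _ _ _ eq])
      (use arr arr' f f' obj exp exp' k w skolem_map_arr[OF split obj(1), folded E_def]
        skolem_map_arr[OF split' obj(1), folded E'_def] in simp_all)
qed

theorem Pex_universal: "universal C Pr PX"
  by (rule universal_PexI[of forall_rep])
    (fact forall_rep_in, fact forall_rep_adj, simp add: forall_rep_reindex_le reindex_forall_rep_le)

end

theorem theorem6:
  assumes "category C"
    and "finite_products C Pr"
    and "doctrine C D"
    and "universal C Pr D"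
    and "has_exponents C Pr"
  shows "existential C Pr (Pex C Pr D) \<and> universal C Pr (Pex C Pr D)"
proof -
  interpret cartesian_doctrine C Pr D
    using assms(1-3) by unfold_locales
  obtain R where "\<forall>p X A. is_proj C Pr p X A \<longrightarrow> is_right_adj D p X A (R p)"
    and "\<forall>p X A p' X' A' f f'. is_proj C Pr p X A \<and> is_proj C Pr p' X' A' \<and>
      f \<in> Hom C A' A \<and> f' \<in> Hom C X' X \<and> pullback C p' f' p f \<longrightarrow>
      (\<forall>x\<in>PO D X. R p' (PM D f' x) = PM D f (R p x))"
    using assms(4) unfolding universal_def by blast
  then interpret universal_doctrine C Pr D R
    using assms(5) by unfold_locales blast+
  show ?thesis
    using Pex_existential Pex_universal by simp
qed

end
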